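(* Let $H\in(0,1)$, $\alpha\in(0,1)$, $b\in\{2,3,\dots\}$ with $\alpha b^H<1$, and let $p=1/H$. Let $W$ be a fractional Brownian motion with Hurst parameter $H$, independent of an i.i.d. sequence $U_1,U_2,\dots$ uniformly distributed on $\{0,1,\dots,b-1\}$, and set $R_m:=\sum_{i=1}^mU_ib^{i-1}$. Let $$G_n:=\sum_{m=1}^n\alpha^{-m}\big(W((R_m+1)b^{-m})-W(R_mb^{-m})\big).$$ Then, as $n\to\infty$, $$(\alpha^pb)^n\,\mathbb E\big[|G_n|^p\big]\longrightarrow\frac{c_H}{(1-\alpha^2b^{2H})^{p/2}},\qquad c_H:=\frac{2^{1/(2H)}\Gamma(\frac{H+1}{2H})}{\sqrt\pi},$$ where the expectation is with respect to the joint law of $W$ and $(U_i)$. *)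

theory Defs
  imports "HOL-Probability.Probability"
begin

definition fbm_cov :: "real \<Rightarrow> real \<Rightarrow> real \<Rightarrow> real" where
  "fbm_cov H s t = (\<bar>s\<bar> powr (2*H) + \<bar>t\<bar> powr (2*H) - \<bar>t - s\<bar> powr (2*H)) / 2"

definition gaussian_rv :: "'a measure \<Rightarrow> ('a \<Rightarrow> real) \<Rightarrow> real \<Rightarrow> real \<Rightarrow> bool" where
  "gaussian_rv M X mu v \<longleftrightarrow> X \<in> borel_measurable M \<and> 0 \<le> v \<and>
     (if v = 0 then (AE \<omega> in M. X \<omega> = mu)
      else distributed M lborel X (normal_density mu (sqrt v)))"

definition is_fbm :: "'a measure \<Rightarrow> real \<Rightarrow> (real \<Rightarrow> 'a \<Rightarrow> real) \<Rightarrow> bool" where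
  "is_fbm M H W \<longleftrightarrow>
     (\<forall>(S::real set) (c::real \<Rightarrow> real). finite S \<and> S \<subseteq> {0..} \<longrightarrow>
        gaussian_rv M (\<lambda>\<omega>. \<Sum>t\<in>S. c t * W t \<omega>) 0
          (\<Sum>s\<in>S. \<Sum>t\<in>S. c s * c t * fbm_cov H s t))"

definition sigma_W :: "'a measure \<Rightarrow> (real \<Rightarrow> 'a \<Rightarrow> real) \<Rightarrow> 'a set set" where
  "sigma_W M W = sigma_sets (space M)
     (\<Union>t\<in>{0..}. {W t -` A \<inter> space M | A. A \<in> sets borel})"

definition sigma_U :: "'a measure \<Rightarrow> (nat \<Rightarrow> 'a \<Rightarrow> nat) \<Rightarrow> 'a set set" where
  "sigma_U M U = sigma_sets (space M) (\<Union>i\<in>{1..}. {U i -` A \<inter> space M | A. A \<in> (UNIV :: nat set set)})"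

definition digitsum :: "nat \<Rightarrow> (nat \<Rightarrow> 'a \<Rightarrow> nat) \<Rightarrow> nat \<Rightarrow> 'a \<Rightarrow> nat" where
  "digitsum b U m \<omega> = (\<Sum>i=1..m. U i \<omega> * b ^ (i - 1))"

definition c_H :: "real \<Rightarrow> real" where
  "c_H H = 2 powr (1 / (2*H)) * Gamma ((H + 1) / (2*H)) / sqrt pi"

end

theory Submission
  imports Defs
begin

text \<open>
  Conditionally on the digits, G_n is a centred Gaussian variable whose variance V(N)
  depends only on N = R_n, and R_n is uniform on {0..<b^n}. Hence
  E|G_n|^p = E|Z|^p * b^-n * (sum of V(N)^(p/2) over N), and E|Z|^p = c_H for p = 1/H.
  With q = \<alpha> b^H the normalised variance (\<alpha> b^H)^2n V(N) is a double sum of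
  q^(n-m) q^(n-m') times the correlation of the level-m and level-m' increments of W
  at the cells of N. Diagonal correlations are 1 and sum to 1/(1-q^2) in the limit.
  An off-diagonal correlation is at most 1 in absolute value; it is of order
  b^(-(1-H)m') when the two cells are at distance at least b^(-m/2), by the mean value
  theorem for the second difference of t^2H, and the cells are that close only for a
  fraction O(b^(-m/2)) of all N. So on average the normalised variance is
  1/(1-q^2) + O(n^2 \<mu>^n) with \<mu> < 1, and continuity of x^(p/2) gives the limit.
\<close>

section \<open>Absolute moments of Gaussian variables\<close>

lemma powr_gaussian_substitution:
  fixes p \<sigma> x :: real assumes p: "0 < p" and s: "0 < \<sigma>" and x: "0 \<le> x"
  shows "x / \<sigma>\<^sup>2 * ((x\<^sup>2 / (2*\<sigma>\<^sup>2)) powr ((p+1)/2 - 1) / exp (x\<^sup>2 / (2*\<sigma>\<^sup>2))) =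
           \<sigma> powr (-(p+1)) * 2 powr ((1-p)/2) * (x powr p * exp (- x\<^sup>2 / (2*\<sigma>\<^sup>2)))"
proof (cases "x = 0")
  case True then show ?thesis using p by simp
next
  case False
  then have x: "x > 0" using x by simp
  have "(x\<^sup>2 / (2*\<sigma>\<^sup>2)) powr ((p+1)/2 - 1) = x powr (p-1) * (2*\<sigma>\<^sup>2) powr (-(p-1)/2)"
  proof -
    have "(x\<^sup>2 / (2*\<sigma>\<^sup>2)) powr ((p+1)/2 - 1) = (x\<^sup>2) powr ((p-1)/2) / (2*\<sigma>\<^sup>2) powr ((p-1)/2)"
      using x s by (simp add: powr_divide field_simps)
    also have "(x\<^sup>2) powr ((p-1)/2) = x powr (p-1)"
      using x by (simp add: powr_powr flip: powr_numeral) (simp add: diff_divide_distrib)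
    also have "1 / (2*\<sigma>\<^sup>2) powr ((p-1)/2) = (2*\<sigma>\<^sup>2) powr (-(p-1)/2)"
      by (metis powr_minus_divide minus_divide_left)
    ultimately show ?thesis by (metis times_divide_eq_right mult_1_right)
  qed
  moreover have "(2*\<sigma>\<^sup>2) powr (-(p-1)/2) = 2 powr ((1-p)/2) * \<sigma> powr (1-p)"
    using s by (simp add: powr_mult powr_powr flip: powr_numeral) (simp add: diff_divide_distrib)
  moreover have "x powr (p-1) = x powr p / x" using x by (simp add: powr_diff)
  moreover have "\<sigma> powr (1-p) = \<sigma>\<^sup>2 * \<sigma> powr (-(p+1))"
    using s by (simp add: powr_add[symmetric] flip: powr_numeral)
  ultimately show ?thesis using x s by (simp add: exp_minus field_simps)
qed

text \<open>Substituting t = x^2 / (2 \<sigma>^2) turns this into Euler's integral for Gamma ((p+1)/2).\<close>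
lemma has_integral_powr_gaussian_halfline:
  fixes p \<sigma> :: real assumes p: "0 < p" and s: "0 < \<sigma>"
  shows "((\<lambda>x. x powr p * exp (- x\<^sup>2 / (2*\<sigma>\<^sup>2))) has_integral
           Gamma ((p+1)/2) * \<sigma> powr (p+1) * 2 powr ((p-1)/2)) {0..}"
proof -
  define sp where "sp = (p+1)/2"
  define f where "f = (\<lambda>t::real. t powr (sp - 1) / exp t)"
  define g where "g = (\<lambda>x::real. x\<^sup>2 / (2*\<sigma>\<^sup>2))"
  define K where "K = \<sigma> powr (-(p+1)) * 2 powr ((1-p)/2)"
  have fi: "(f has_integral Gamma sp) {0..}"
    unfolding f_def using p by (intro Gamma_integral_real) (simp add: sp_def)
  have fabs: "f absolutely_integrable_on {0..}"
    using fi by (intro nonnegative_absolutely_integrable_1) (auto simp: f_def)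
  have gS: "g ` {0..} = {0..}"
  proof
    show "{0..} \<subseteq> g ` {0..}"
    proof
      fix t :: real assume "t \<in> {0..}"
      then have "g (\<sigma> * sqrt (2*t)) = t" "\<sigma> * sqrt (2*t) \<in> {0..}"
        using s by (simp_all add: g_def power_mult_distrib)
      then show "t \<in> g ` {0..}" by (metis image_eqI)
    qed
  qed (auto simp: g_def)
  have der: "\<And>x. x \<in> {0..} \<Longrightarrow> (g has_field_derivative (x/\<sigma>\<^sup>2)) (at x within {0..})"
    unfolding g_def using s by (auto intro!: derivative_eq_intros simp: field_simps power2_eq_square)
  have inj: "inj_on g {0..}"
    using s by (auto simp: inj_on_def g_def power2_eq_iff_nonneg)
  have "(\<lambda>x. \<bar>x/\<sigma>\<^sup>2\<bar> * f (g x)) absolutely_integrable_on {0..} \<and>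
           integral {0..} (\<lambda>x. \<bar>x/\<sigma>\<^sup>2\<bar> * f (g x)) = Gamma sp"
    using has_absolute_integral_change_of_variables_1'[OF _ der inj, of f "Gamma sp"] gS fabs fi
    by (auto dest: integral_unique)
  then have "((\<lambda>x. \<bar>x/\<sigma>\<^sup>2\<bar> * f (g x)) has_integral Gamma sp) {0..}"
    by (metis absolutely_integrable_on_def has_integral_integral)
  moreover have "\<bar>x/\<sigma>\<^sup>2\<bar> * f (g x) = K * (x powr p * exp (- x\<^sup>2 / (2*\<sigma>\<^sup>2)))" if "x \<in> {0..}" for x
    using powr_gaussian_substitution[OF p s, of x] that unfolding f_def g_def sp_def K_def by simp
  ultimately have "((\<lambda>x. K * (x powr p * exp (- x\<^sup>2 / (2*\<sigma>\<^sup>2)))) has_integral Gamma sp) {0..}"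
    by (metis (no_types, lifting) has_integral_eq)
  from has_integral_mult_right[OF this, of "1/K"]
  have "((\<lambda>x. x powr p * exp (- x\<^sup>2 / (2*\<sigma>\<^sup>2))) has_integral Gamma sp / K) {0..}"
    using s by (simp add: K_def)
  moreover have "Gamma sp / K = Gamma ((p+1)/2) * \<sigma> powr (p+1) * 2 powr ((p-1)/2)"
    using s unfolding K_def sp_def
    by (simp add: powr_minus_divide field_simps flip: powr_add) 
  ultimately show ?thesis by simp
qed

definition normal_abs_moment :: "real \<Rightarrow> real" where
  "normal_abs_moment p = 2 powr (p/2) * Gamma ((p+1)/2) / sqrt pi"

lemma nn_integral_abs_powr_gaussian:
  fixes p \<sigma> :: real assumes p: "0 < p" and s: "0 < \<sigma>"
  shows "(\<integral>\<^sup>+x. ennreal (\<bar>x\<bar> powr p * exp (- x\<^sup>2 / (2*\<sigma>\<^sup>2))) \<partial>lborel) =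
           ennreal (2 * (Gamma ((p+1)/2) * \<sigma> powr (p+1) * 2 powr ((p-1)/2)))"
proof -
  define I0 where "I0 = Gamma ((p+1)/2) * \<sigma> powr (p+1) * 2 powr ((p-1)/2)"
  define h where "h = (\<lambda>x::real. \<bar>x\<bar> powr p * exp (- x\<^sup>2 / (2*\<sigma>\<^sup>2)))"
  have I0: "I0 \<ge> 0" unfolding I0_def using p by (intro mult_nonneg_nonneg) (auto intro: Gamma_real_nonneg)
  have hm[measurable]: "h \<in> borel_measurable borel" unfolding h_def by measurable
  have pos: "(\<integral>\<^sup>+x. ennreal (h x) * indicator {0..} x \<partial>lborel) = ennreal I0"
  proof -
    have "(\<integral>\<^sup>+x. ennreal (h x) * indicator {0..} x \<partial>lborel) =
          (\<integral>\<^sup>+x. ennreal (x powr p * exp (- x\<^sup>2 / (2*\<sigma>\<^sup>2))) * indicator {0..} x \<partial>lborel)"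
      by (intro nn_integral_cong) (auto simp: h_def indicator_def)
    also have "\<dots> = ennreal I0" unfolding I0_def
      by (rule nn_integral_has_integral_lebesgue'[OF _ has_integral_powr_gaussian_halfline[OF p s]]) simp
    finally show ?thesis .
  qed
  have neg: "(\<integral>\<^sup>+x. ennreal (h x) * indicator {..<0} x \<partial>lborel) = ennreal I0"
  proof -
    have "(\<integral>\<^sup>+x. ennreal (h x) * indicator {..<0} x \<partial>lborel) =
        ennreal \<bar>-1\<bar> * (\<integral>\<^sup>+x. ennreal (h (0 + (-1) * x)) * indicator {..<0} (0 + (-1)*x) \<partial>lborel)"
      by (rule nn_integral_real_affine) auto
    also have "\<dots> = (\<integral>\<^sup>+x. ennreal (h x) * indicator {0..} x \<partial>lborel)"
      using p by (simp, intro nn_integral_cong) (auto simp: indicator_def h_def)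
    finally show ?thesis using pos by simp
  qed
  have "(\<integral>\<^sup>+x. ennreal (h x) \<partial>lborel) =
        (\<integral>\<^sup>+x. ennreal (h x) * indicator {0..} x + ennreal (h x) * indicator {..<0} x \<partial>lborel)"
    by (intro nn_integral_cong) (auto simp: indicator_def)
  also have "\<dots> = ennreal I0 + ennreal I0"
    by (subst nn_integral_add) (auto simp: pos neg)
  also have "\<dots> = ennreal (2 * I0)"
    using I0 by (metis ennreal_plus mult_2)
  finally show ?thesis by (simp only: h_def I0_def)
qed

lemma has_bochner_integral_normal_abs_powr:
  fixes p \<sigma> :: real assumes p: "0 < p" and s: "0 < \<sigma>"
  shows "has_bochner_integral lborel (\<lambda>x. normal_density 0 \<sigma> x * \<bar>x\<bar> powr p) (\<sigma> powr p * normal_abs_moment p)"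
proof -
  define I0 where "I0 = Gamma ((p+1)/2) * \<sigma> powr (p+1) * 2 powr ((p-1)/2)"
  define c where "c = 1 / sqrt (2 * pi * \<sigma>\<^sup>2)"
  have I0: "I0 \<ge> 0" unfolding I0_def using p by (intro mult_nonneg_nonneg) (auto intro: Gamma_real_nonneg)
  have c: "c > 0" using s by (simp add: c_def)
  have "(\<integral>\<^sup>+x. ennreal (normal_density 0 \<sigma> x * \<bar>x\<bar> powr p) \<partial>lborel) =
        (\<integral>\<^sup>+x. ennreal c * ennreal (\<bar>x\<bar> powr p * exp (- x\<^sup>2 / (2*\<sigma>\<^sup>2))) \<partial>lborel)"
  proof (intro nn_integral_cong)
    fix x :: real
    have nd: "normal_density 0 \<sigma> x * \<bar>x\<bar> powr p = c * (\<bar>x\<bar> powr p * exp (- x\<^sup>2 / (2*\<sigma>\<^sup>2)))"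
      by (simp add: normal_density_def c_def)
    show "ennreal (normal_density 0 \<sigma> x * \<bar>x\<bar> powr p) =
        ennreal c * ennreal (\<bar>x\<bar> powr p * exp (- x\<^sup>2 / (2*\<sigma>\<^sup>2)))"
      unfolding nd using c by (intro ennreal_mult) auto
  qed
  also have "\<dots> = ennreal c * ennreal (2 * I0)"
    by (subst nn_integral_cmult) (simp_all only: nn_integral_abs_powr_gaussian[OF p s] I0_def, measurable)
  also have "\<dots> = ennreal (c * (2 * I0))"
    using c I0 by (simp add: ennreal_mult)
  also have "c * (2 * I0) = \<sigma> powr p * normal_abs_moment p"
  proof -
    have "sqrt (2 * pi * \<sigma>\<^sup>2) = sqrt 2 * sqrt pi * \<sigma>" using s by (simp add: real_sqrt_mult)
    moreover have "sqrt 2 = 2 powr (1/2)" by (simp add: powr_half_sqrt)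
    moreover have "\<sigma> powr (p+1) = \<sigma> powr p * \<sigma>" using s by (simp add: powr_add)
    moreover have "2 * 2 powr ((p-1)/2) = 2 powr (1/2) * (2::real) powr (p/2)"
    proof -
      have "2 * 2 powr ((p-1)/2) = 2 powr (1 + (p-1)/2)" by (simp add: powr_add)
      also have "1 + (p-1)/2 = 1/2 + p/2" by (simp add: field_simps)
      finally show ?thesis by (simp add: powr_add)
    qed
    ultimately show ?thesis using s unfolding c_def I0_def normal_abs_moment_def by (simp add: field_simps)
  qed
  moreover have "0 \<le> normal_abs_moment p" unfolding normal_abs_moment_def using p by (auto intro!: Gamma_real_nonneg)
  ultimately show ?thesis
    by (intro has_bochner_integral_nn_integral) (auto intro!: mult_nonneg_nonneg simp: normal_density_def)
qed

lemma gaussian_rv_abs_powr: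
  fixes p :: real assumes M: "prob_space M" and p: "0 < p" and X: "gaussian_rv M X 0 v"
  shows "integrable M (\<lambda>\<omega>. \<bar>X \<omega>\<bar> powr p)"
    "prob_space.expectation M (\<lambda>\<omega>. \<bar>X \<omega>\<bar> powr p) = v powr (p/2) * normal_abs_moment p"
proof -
  interpret prob_space M by fact
  have Xm[measurable]: "X \<in> borel_measurable M" and v: "0 \<le> v" using X by (auto simp: gaussian_rv_def)
  have "integrable M (\<lambda>\<omega>. \<bar>X \<omega>\<bar> powr p) \<and> expectation (\<lambda>\<omega>. \<bar>X \<omega>\<bar> powr p) = v powr (p/2) * normal_abs_moment p"
  proof (cases "v = 0")
    case True
    hence ae: "AE \<omega> in M. X \<omega> = 0" using X by (auto simp: gaussian_rv_def)
    hence ae2: "AE \<omega> in M. \<bar>X \<omega>\<bar> powr p = 0" by eventually_elim simp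
    have "integrable M (\<lambda>\<omega>. \<bar>X \<omega>\<bar> powr p)"
      by (rule integrable_cong_AE_imp[where g="\<lambda>_. 0"]) (use ae2 in auto)
    moreover have "expectation (\<lambda>\<omega>. \<bar>X \<omega>\<bar> powr p) = 0"
      using integral_cong_AE[OF _ _ ae2] by simp
    ultimately show ?thesis using True by simp
  next
    case False
    hence v: "v > 0" using v by simp
    define \<sigma> where "\<sigma> = sqrt v"
    have s: "\<sigma> > 0" using v by (simp add: \<sigma>_def)
    have D: "distributed M lborel X (normal_density 0 \<sigma>)" using X False by (simp add: gaussian_rv_def \<sigma>_def)
    have B: "has_bochner_integral lborel (\<lambda>x. normal_density 0 \<sigma> x * \<bar>x\<bar> powr p) (\<sigma> powr p * normal_abs_moment p)"
      by (rule has_bochner_integral_normal_abs_powr[OF p s])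
    have "integrable M (\<lambda>\<omega>. \<bar>X \<omega>\<bar> powr p)"
      using distributed_integrable[OF D, of "\<lambda>x. \<bar>x\<bar> powr p"] B
      by (auto simp: has_bochner_integral_iff normal_density_nonneg)
    moreover have "expectation (\<lambda>\<omega>. \<bar>X \<omega>\<bar> powr p) = \<sigma> powr p * normal_abs_moment p"
      using distributed_integral[OF D, of "\<lambda>x. \<bar>x\<bar> powr p"] B
      by (auto simp: has_bochner_integral_iff normal_density_nonneg)
    moreover have "\<sigma> powr p = v powr (p/2)" using v
      by (simp add: \<sigma>_def powr_half_sqrt[symmetric] powr_powr)
    ultimately show ?thesis by simp
  qed
  thus "integrable M (\<lambda>\<omega>. \<bar>X \<omega>\<bar> powr p)"
    "prob_space.expectation M (\<lambda>\<omega>. \<bar>X \<omega>\<bar> powr p) = v powr (p/2) * normal_abs_moment p" by auto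
qed

section \<open>Increments of fractional Brownian motion\<close>

lemma sum_image_regroup:
  fixes a F :: "_ \<Rightarrow> real"
  assumes "finite I"
  shows "(\<Sum>s\<in>t ` I. (\<Sum>i\<in>{i\<in>I. t i = s}. a i) * F s) = (\<Sum>i\<in>I. a i * F (t i))"
proof -
  have "(\<Sum>i\<in>I. a i * F (t i)) = (\<Sum>s\<in>t ` I. \<Sum>i\<in>{i\<in>I. t i = s}. a i * F (t i))"
    by (rule sum.image_gen[OF assms])
  also have "\<dots> = (\<Sum>s\<in>t ` I. (\<Sum>i\<in>{i\<in>I. t i = s}. a i) * F s)"
  proof (intro sum.cong refl)
    fix s assume "s \<in> t ` I"
    have "(\<Sum>i\<in>{i\<in>I. t i = s}. a i * F (t i)) = (\<Sum>i\<in>{i\<in>I. t i = s}. a i * F s)"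
      by (rule sum.cong) auto
    also have "\<dots> = (\<Sum>i\<in>{i\<in>I. t i = s}. a i) * F s" by (rule sum_distrib_right[symmetric])
    finally show "(\<Sum>i\<in>{i\<in>I. t i = s}. a i * F (t i)) = (\<Sum>i\<in>{i\<in>I. t i = s}. a i) * F s" .
  qed
  finally show ?thesis by simp
qed

lemma is_fbm_gaussian_lincomb:
  assumes W: "is_fbm M H W" and I: "finite I" and t: "\<And>i. i \<in> I \<Longrightarrow> t i \<ge> 0"
  shows "gaussian_rv M (\<lambda>\<omega>. \<Sum>i\<in>I. a i * W (t i) \<omega>) 0
           (\<Sum>i\<in>I. \<Sum>j\<in>I. a i * a j * fbm_cov H (t i) (t j))"
proof -
  define c where "c = (\<lambda>s. \<Sum>i\<in>{i\<in>I. t i = s}. a i)"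
  have S: "finite (t ` I)" "t ` I \<subseteq> {0..}" using I t by auto
  have G: "gaussian_rv M (\<lambda>\<omega>. \<Sum>s\<in>t ` I. c s * W s \<omega>) 0
          (\<Sum>s\<in>t ` I. \<Sum>u\<in>t ` I. c s * c u * fbm_cov H s u)"
    using W S unfolding is_fbm_def by blast
  have e1: "(\<Sum>s\<in>t ` I. c s * W s \<omega>) = (\<Sum>i\<in>I. a i * W (t i) \<omega>)" for \<omega>
    unfolding c_def by (rule sum_image_regroup[OF I])
  have "(\<Sum>s\<in>t ` I. \<Sum>u\<in>t ` I. c s * c u * fbm_cov H s u) =
        (\<Sum>s\<in>t ` I. c s * (\<Sum>u\<in>t ` I. c u * fbm_cov H s u))"
    by (simp add: sum_distrib_left mult.assoc)
  also have "\<dots> = (\<Sum>s\<in>t ` I. c s * (\<Sum>j\<in>I. a j * fbm_cov H s (t j)))"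
    unfolding c_def by (subst sum_image_regroup[OF I]) simp
  also have "\<dots> = (\<Sum>i\<in>I. a i * (\<Sum>j\<in>I. a j * fbm_cov H (t i) (t j)))"
    unfolding c_def by (rule sum_image_regroup[OF I])
  also have "\<dots> = (\<Sum>i\<in>I. \<Sum>j\<in>I. a i * a j * fbm_cov H (t i) (t j))"
    by (simp add: sum_distrib_left mult.assoc)
  finally show ?thesis using G e1 by simp
qed

definition fbm_incr_cov :: "real \<Rightarrow> real \<Rightarrow> real \<Rightarrow> real \<Rightarrow> real \<Rightarrow> real" where
  "fbm_incr_cov H l1 r1 l2 r2 = fbm_cov H r1 r2 - fbm_cov H r1 l2 - fbm_cov H l1 r2 + fbm_cov H l1 l2"

lemma sum_Times_UNIV_bool:
  assumes "finite J"
  shows "(\<Sum>i\<in>J \<times> (UNIV::bool set). f i) = (\<Sum>j\<in>J. f (j,True) + f (j,False))"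
proof -
  have "(\<Sum>i\<in>J \<times> (UNIV::bool set). f i) = (\<Sum>j\<in>J. \<Sum>e\<in>UNIV. f (j,e))"
    using sum.Sigma[of J "\<lambda>_. UNIV" "\<lambda>j e. f (j,e)", symmetric] assms by (simp add: case_prod_eta)
  thus ?thesis by (simp add: UNIV_bool add.commute)
qed

lemma is_fbm_gaussian_incr_lincomb:
  assumes W: "is_fbm M H W" and J: "finite J" and lr: "\<And>j. j \<in> J \<Longrightarrow> 0 \<le> l j \<and> 0 \<le> r j"
  shows "gaussian_rv M (\<lambda>\<omega>. \<Sum>j\<in>J. \<beta> j * (W (r j) \<omega> - W (l j) \<omega>)) 0
           (\<Sum>j\<in>J. \<Sum>k\<in>J. \<beta> j * \<beta> k * fbm_incr_cov H (l j) (r j) (l k) (r k))"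
proof -
  define t where "t = (\<lambda>(j,e::bool). if e then r j else l j)"
  define a where "a = (\<lambda>(j,e::bool). if e then \<beta> j else - \<beta> j)"
  have G: "gaussian_rv M (\<lambda>\<omega>. \<Sum>i\<in>J \<times> UNIV. a i * W (t i) \<omega>) 0
           (\<Sum>i\<in>J \<times> UNIV. \<Sum>i'\<in>J \<times> UNIV. a i * a i' * fbm_cov H (t i) (t i'))"
    by (rule is_fbm_gaussian_lincomb[OF W]) (use J lr in \<open>auto simp: t_def\<close>)
  have e1: "(\<Sum>i\<in>J \<times> UNIV. a i * W (t i) \<omega>) = (\<Sum>j\<in>J. \<beta> j * (W (r j) \<omega> - W (l j) \<omega>))" for \<omega>
    by (simp add: sum_Times_UNIV_bool[OF J] a_def t_def algebra_simps sum_subtractf)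
  have e2: "(\<Sum>i\<in>J \<times> UNIV. \<Sum>i'\<in>J \<times> UNIV. a i * a i' * fbm_cov H (t i) (t i')) =
     (\<Sum>j\<in>J. \<Sum>k\<in>J. \<beta> j * \<beta> k * fbm_incr_cov H (l j) (r j) (l k) (r k))"
    by (simp add: sum_Times_UNIV_bool[OF J] a_def t_def algebra_simps fbm_incr_cov_def
         sum.distrib sum_subtractf sum_distrib_left sum_negf)
  show ?thesis using G by (simp add: e1 e2)
qed

lemma fbm_incr_cov_psd:
  assumes W: "is_fbm M H W" and J: "finite J" and lr: "\<And>j. j \<in> J \<Longrightarrow> 0 \<le> l j \<and> 0 \<le> r j"
  shows "0 \<le> (\<Sum>j\<in>J. \<Sum>k\<in>J. \<beta> j * \<beta> k * fbm_incr_cov H (l j) (r j) (l k) (r k))"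
  using is_fbm_gaussian_incr_lincomb[OF assms, where \<beta>=\<beta>] by (simp add: gaussian_rv_def)

lemma fbm_incr_cov_commute: "fbm_incr_cov H l2 r2 l1 r1 = fbm_incr_cov H l1 r1 l2 r2"
  by (simp add: fbm_incr_cov_def fbm_cov_def abs_minus_commute algebra_simps)

lemma fbm_incr_cov_self: "fbm_incr_cov H x y x y = \<bar>y - x\<bar> powr (2*H)"
  by (simp add: fbm_incr_cov_def fbm_cov_def abs_minus_commute algebra_simps)

lemma fbm_incr_cov_Cauchy_Schwarz:
  assumes W: "is_fbm M H W" and nn: "0 \<le> l1" "0 \<le> r1" "0 \<le> l2" "0 \<le> r2"
  shows "(fbm_incr_cov H l1 r1 l2 r2)\<^sup>2 \<le> fbm_incr_cov H l1 r1 l1 r1 * fbm_incr_cov H l2 r2 l2 r2"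
proof -
  define A where "A = fbm_incr_cov H l1 r1 l1 r1"
  define B where "B = fbm_incr_cov H l1 r1 l2 r2"
  define C where "C = fbm_incr_cov H l2 r2 l2 r2"
  have q: "0 \<le> x\<^sup>2 * A + 2 * x * y * B + y\<^sup>2 * C" for x y
  proof -
    have "0 \<le> (\<Sum>j\<in>UNIV. \<Sum>k\<in>UNIV. (if j then x else y) * (if k then x else y) *
       fbm_incr_cov H (if j then l1 else l2) (if j then r1 else r2) (if k then l1 else l2) (if k then r1 else r2))"
      by (rule fbm_incr_cov_psd[OF W]) (use nn in auto)
    thus ?thesis by (simp add: UNIV_bool A_def B_def C_def fbm_incr_cov_commute power2_eq_square algebra_simps)
  qed
  have A: "0 \<le> A" using q[of 1 0] by simp
  have C: "0 \<le> C" using q[of 0 1] by simp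
  show ?thesis
  proof (cases "A = 0")
    case True
    have "B = 0"
    proof (rule ccontr)
      assume "B \<noteq> 0"
      have "0 \<le> 2 * (- (C + 1) / (2*B)) * 1 * B + 1\<^sup>2 * C" using q[of "- (C + 1) / (2*B)" 1] True by simp
      also have "\<dots> = -1" using \<open>B \<noteq> 0\<close> by (simp add: field_simps)
      finally show False by simp
    qed
    thus ?thesis using True by (simp add: A_def B_def C_def)
  next
    case False
    hence Ap: "A > 0" using A by simp
    have "0 \<le> (-B/A)\<^sup>2 * A + 2 * (-B/A) * 1 * B + 1\<^sup>2 * C" by (rule q)
    also have "\<dots> = C - B\<^sup>2 / A" using Ap by (simp add: field_simps power2_eq_square)
    finally have "B\<^sup>2 / A \<le> C" by simp
    hence "B\<^sup>2 \<le> C * A" using Ap by (simp add: field_simps)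
    thus ?thesis by (simp add: A_def B_def C_def mult.commute)
  qed
qed

lemma indep_set_integral_indicator_times:
  assumes M: "prob_space M" and ind: "prob_space.indep_set M SW SU"
    and SWs: "sigma_algebra (space M) SW" and SUs: "sigma_algebra (space M) SU"
    and X: "X \<in> borel_measurable M" and XW: "\<And>B. B \<in> sets borel \<Longrightarrow> X -` B \<inter> space M \<in> SW"
    and A: "A \<in> SU" "A \<in> sets M" and Xi: "integrable M X"
  shows "(\<integral>\<omega>. indicator A \<omega> * X \<omega> \<partial>M) = measure M A * prob_space.expectation M X"
proof -
  interpret prob_space M by fact
  have sub1: "sigma_sets (space M) {indicator A -` B \<inter> space M | B. B \<in> sets (borel :: real measure)} \<subseteq> SU"
  proof (rule sigma_algebra.sigma_sets_subset[OF SUs], safe)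
    fix B :: "real set"
    have Asp: "A \<subseteq> space M" using A sets.sets_into_space by blast
    have e: "indicator A -` B \<inter> space M = (if 1\<in>B then A else {}) \<union> (if 0 \<in> B then space M - A else {})"
      using Asp by (auto simp: indicator_def of_bool_def split: if_splits)
    have "{} \<in> SU" "A \<in> SU" "space M - A \<in> SU"
      using A SUs by (auto simp: sigma_algebra_iff2)
    moreover have "\<And>a b. a \<in> SU \<Longrightarrow> b \<in> SU \<Longrightarrow> a \<union> b \<in> SU"
      by (rule ring_of_sets.Un[OF algebra.axioms(1)[OF sigma_algebra.axioms(1)[OF SUs]]])
    ultimately show "indicator A -` B \<inter> space M \<in> SU" unfolding e by (auto split: if_splits)
  qed
  have sub2: "sigma_sets (space M) {X -` B \<inter> space M | B. B \<in> sets (borel :: real measure)} \<subseteq> SW"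
    by (rule sigma_algebra.sigma_sets_subset[OF SWs]) (use XW in blast)
  have "indep_set SU SW" using ind unfolding indep_sets2_eq by (metis Int_commute mult.commute)
  hence "indep_set (sigma_sets (space M) {indicator A -` B \<inter> space M | B. B \<in> sets (borel :: real measure)})
         (sigma_sets (space M) {X -` B \<inter> space M | B. B \<in> sets (borel :: real measure)})"
    using sub1 sub2 by (simp add: indep_sets2_eq) blast
  hence iv: "indep_var borel (indicator A) borel X"
    using X A by (simp add: indep_var_eq)
  have "(\<integral>\<omega>. indicator A \<omega> * X \<omega> \<partial>M) = (\<integral>\<omega>. indicator A \<omega> \<partial>M) * expectation X"
    by (rule indep_var_lebesgue_integral[OF iv _ Xi]) (use A in \<open>simp add: integrable_indicator_iff less_top[symmetric]\<close>)
  thus ?thesis using A by simp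
qed

lemma powr_second_difference:
  fixes c z a h :: real assumes z: "0 < z" and a: "0 < a" and h: "0 < h"
  obtains \<eta> where "z < \<eta>"
    "(z+a+h) powr c - (z+a) powr c - (z+h) powr c + z powr c = a * h * (c * (c-1) * \<eta> powr (c-2))"
proof -
  define g where "g = (\<lambda>t. (t + h) powr c - t powr c)"
  define g' where "g' = (\<lambda>t. c * (t + h) powr (c - 1) - c * t powr (c - 1))"
  have "DERIV g t :> g' t" if "z \<le> t" for t
    unfolding g_def g'_def using that z h
    by (auto intro!: derivative_eq_intros DERIV_shift[THEN iffD1] simp: algebra_simps)
  then obtain \<xi> where \<xi>: "z < \<xi>" "g (z+a) - g z = a * g' \<xi>"
    using MVT2[of z "z+a" g g'] a by auto
  have "DERIV (\<lambda>t. c * t powr (c-1)) t :> c * ((c-1) * t powr (c-2))" if "\<xi> \<le> t" for t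
    using that \<xi> z by (auto intro!: derivative_eq_intros simp: algebra_simps)
  then obtain \<eta> where \<eta>: "\<xi> < \<eta>" "c * (\<xi>+h) powr (c-1) - c * \<xi> powr (c-1) = h * (c * ((c-1) * \<eta> powr (c-2)))"
    using MVT2[of \<xi> "\<xi>+h" "\<lambda>t. c * t powr (c-1)" "\<lambda>t. c * ((c-1) * t powr (c-2))"] h
    by (metis add_diff_cancel_left' less_add_same_cancel1 order_less_imp_le)
  have "(z+a+h) powr c - (z+a) powr c - (z+h) powr c + z powr c = g (z+a) - g z"
    by (simp add: g_def add_ac)
  also have "\<dots> = a * h * (c * (c-1) * \<eta> powr (c-2))"
    using \<xi> \<eta> by (simp add: g'_def mult_ac)
  finally show ?thesis using that[of \<eta>] \<xi> \<eta> by simp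
qed

lemma fbm_incr_cov_far_bound:
  fixes H a h D x y :: real
  assumes H: "0 < H" "H < 1" and a: "0 < a" and h: "0 < h" and D: "0 < D" and far: "y \<ge> x + a + D"
  shows "\<bar>fbm_incr_cov H x (x+a) y (y+h)\<bar> \<le> H * \<bar>2*H - 1\<bar> * a * h * D powr (2*H - 2)"
proof -
  define z where "z = y - x - a"
  have z: "D \<le> z" using far by (simp add: z_def)
  obtain \<eta> where \<eta>: "z < \<eta>" and diff:
    "(z+a+h) powr (2*H) - (z+a) powr (2*H) - (z+h) powr (2*H) + z powr (2*H) =
       a * h * (2*H * (2*H-1) * \<eta> powr (2*H-2))"
    using powr_second_difference[of z a h "2*H"] z D a h by auto
  have "fbm_incr_cov H x (x+a) y (y+h) = a * h * (H * (2*H-1) * \<eta> powr (2*H-2))"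
    using diff z D a h unfolding fbm_incr_cov_def fbm_cov_def z_def
    by (simp add: abs_minus_commute field_simps)
  moreover have "\<eta> powr (2*H - 2) \<le> D powr (2*H - 2)"
    using \<eta> z D H by (intro powr_mono2') auto
  ultimately show ?thesis
    using a h H by (simp add: abs_mult mult_left_mono mult_ac)
qed

section \<open>Base-b digit expansions\<close>

definition radix_val :: "nat \<Rightarrow> (nat \<Rightarrow> nat) \<Rightarrow> nat \<Rightarrow> nat" where
  "radix_val b u m = (\<Sum>i=1..m. u i * b ^ (i - 1))"

lemma radix_val_cong: "(\<And>i. i \<in> {1..m} \<Longrightarrow> u i = v i) \<Longrightarrow> radix_val b u m = radix_val b v m"
  unfolding radix_val_def by (intro sum.cong) auto

lemma radix_val_Suc: "radix_val b u (Suc m) = radix_val b u m + u (Suc m) * b ^ m"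
  by (simp add: radix_val_def)

lemma radix_val_less: "(\<And>i. i \<in> {1..m} \<Longrightarrow> u i < b) \<Longrightarrow> radix_val b u m < b ^ m"
proof (induction m)
  case 0 thus ?case by (simp add: radix_val_def)
next
  case (Suc m)
  have ih: "radix_val b u m < b ^ m" using Suc by auto
  have us: "u (Suc m) < b" using Suc.prems by auto
  hence "u (Suc m) \<le> b - 1" by simp
  hence "radix_val b u m + u (Suc m) * b ^ m \<le> (b ^ m - 1) + (b - 1) * b ^ m" using ih
    by (intro add_mono mult_right_mono) auto
  also have "\<dots> < b ^ Suc m" using us ih by (cases b) (auto simp: algebra_simps)
  finally show ?case by (simp add: radix_val_Suc)
qed

lemma radix_val_mod:
  assumes "\<And>i. i \<in> {1..n} \<Longrightarrow> u i < b" "m \<le> n"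
  shows "radix_val b u n mod b ^ m = radix_val b u m"
  using assms(2)
proof (induction n rule: dec_induct)
  case base
  have "radix_val b u m < b ^ m" by (rule radix_val_less) (use assms in auto)
  thus ?case by simp
next
  case (step k)
  have "b ^ m dvd u (Suc k) * b ^ k" using step by (intro dvd_mult le_imp_power_dvd) auto
  hence "radix_val b u (Suc k) mod b ^ m = radix_val b u k mod b ^ m" by (simp add: radix_val_Suc mod_add_right_eq[symmetric])
  thus ?case using step by simp
qed

lemma radix_val_digits: "radix_val b (\<lambda>i. N div b ^ (i - 1) mod b) n = N mod b ^ n"
proof (induction n)
  case 0 thus ?case by (simp add: radix_val_def)
next
  case (Suc n)
  have "N mod (b ^ n * b) = b ^ n * (N div b ^ n mod b) + N mod b ^ n" by (rule mod_mult2_eq)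
  thus ?case using Suc by (simp add: radix_val_Suc algebra_simps)
qed

lemma bij_betw_radix_val:
  assumes b: "b \<ge> 2"
  shows "bij_betw (\<lambda>u. radix_val b u n) (PiE {1..n} (\<lambda>_. {..<b})) {..<b ^ n}"
proof -
  let ?P = "PiE {1..n} (\<lambda>_. {..<b})"
  have img: "(\<lambda>u. radix_val b u n) ` ?P = {..<b ^ n}"
  proof
    show "(\<lambda>u. radix_val b u n) ` ?P \<subseteq> {..<b ^ n}" by (auto intro!: radix_val_less simp: PiE_def Pi_def)
    show "{..<b ^ n} \<subseteq> (\<lambda>u. radix_val b u n) ` ?P"
    proof
      fix N assume N: "N \<in> {..<b ^ n}"
      define u where "u = restrict (\<lambda>i. N div b ^ (i - 1) mod b) {1..n}"
      have "u \<in> ?P" using b by (auto simp: u_def)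
      moreover have "radix_val b u n = N"
      proof -
        have "radix_val b u n = radix_val b (\<lambda>i. N div b ^ (i - 1) mod b) n" by (rule radix_val_cong) (simp add: u_def)
        also have "\<dots> = N" using N radix_val_digits[of b N n] by simp
        finally show ?thesis .
      qed
      ultimately show "N \<in> (\<lambda>u. radix_val b u n) ` ?P" by (metis image_eqI)
    qed
  qed
  have "card ?P = b ^ n" by (simp add: card_PiE)
  hence "card ((\<lambda>u. radix_val b u n) ` ?P) = card ?P" unfolding img by simp
  hence "inj_on (\<lambda>u. radix_val b u n) ?P" by (rule eq_card_imp_inj_on[rotated]) (simp add: finite_PiE)
  thus ?thesis using img by (simp add: bij_betw_def)
qed

section \<open>Conditioning on the digits\<close>

text \<open>The level-m b-adic cell of G_n is [cell_start b m R_n, cell_start b m R_n + b^-m];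
  cond_G is G_n with R_n frozen to N, and cond_var is its variance.\<close>
definition cell_start :: "nat \<Rightarrow> nat \<Rightarrow> nat \<Rightarrow> real" where
  "cell_start b m N = real (N mod b ^ m) / real b ^ m"

lemma cell_start_nonneg: "0 \<le> cell_start b m N"
  by (simp add: cell_start_def)

definition cond_G :: "real \<Rightarrow> nat \<Rightarrow> (real \<Rightarrow> 'a \<Rightarrow> real) \<Rightarrow> nat \<Rightarrow> nat \<Rightarrow> 'a \<Rightarrow> real" where
  "cond_G \<alpha> b W n N \<omega> = (\<Sum>m=1..n. (1 / \<alpha> ^ m) *
      (W (cell_start b m N + 1 / real b ^ m) \<omega> - W (cell_start b m N) \<omega>))"

definition cond_var :: "real \<Rightarrow> real \<Rightarrow> nat \<Rightarrow> nat \<Rightarrow> nat \<Rightarrow> real" where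
  "cond_var H \<alpha> b n N = (\<Sum>m=1..n. \<Sum>m'=1..n. (1 / \<alpha> ^ m) * (1 / \<alpha> ^ m') *
      fbm_incr_cov H (cell_start b m N) (cell_start b m N + 1 / real b ^ m)
                     (cell_start b m' N) (cell_start b m' N + 1 / real b ^ m'))"

lemma cond_G_gaussian:
  assumes "is_fbm M H W"
  shows "gaussian_rv M (cond_G \<alpha> b W n N) 0 (cond_var H \<alpha> b n N)"
  using is_fbm_gaussian_incr_lincomb[OF assms, of "{1..n}" "\<lambda>m. cell_start b m N"
      "\<lambda>m. cell_start b m N + 1 / real b ^ m" "\<lambda>m. 1 / \<alpha> ^ m"]
  unfolding cond_G_def[abs_def] cond_var_def by (simp add: cell_start_nonneg)

lemma cond_var_nonneg: "is_fbm M H W \<Longrightarrow> 0 \<le> cond_var H \<alpha> b n N"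
  using cond_G_gaussian by (fastforce simp: gaussian_rv_def)

lemma is_fbm_measurable:
  assumes "is_fbm M H W" "0 \<le> t"
  shows "W t \<in> borel_measurable M"
  using assms(1)[unfolded is_fbm_def, rule_format, of "{t}" "\<lambda>_. 1"] assms(2)
  by (simp add: gaussian_rv_def)

definition W_measure :: "'a measure \<Rightarrow> (real \<Rightarrow> 'a \<Rightarrow> real) \<Rightarrow> 'a measure" where
  "W_measure M W = sigma (space M) (\<Union>t\<in>{0..}. {W t -` A \<inter> space M | A. A \<in> sets borel})"

lemma sets_W_measure: "sets (W_measure M W) = sigma_W M W"
  unfolding W_measure_def sigma_W_def by (subst sets_measure_of) auto

lemma space_W_measure: "space (W_measure M W) = space M"
  unfolding W_measure_def by (subst space_measure_of) auto

lemma measurable_W_measure: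
  assumes "0 \<le> t"
  shows "W t \<in> borel_measurable (W_measure M W)"
proof (rule measurableI)
  fix B :: "real set" assume "B \<in> sets borel"
  then show "W t -` B \<inter> space (W_measure M W) \<in> sets (W_measure M W)"
    using assms unfolding sets_W_measure space_W_measure sigma_W_def
    by (intro sigma_sets.Basic) auto
qed (simp add: space_W_measure)

lemma cond_G_measurable_W_measure:
  "cond_G \<alpha> b W n N \<in> borel_measurable (W_measure M W)"
proof -
  have [measurable]: "W (cell_start b m N) \<in> borel_measurable (W_measure M W)"
    "W (cell_start b m N + 1 / real b ^ m) \<in> borel_measurable (W_measure M W)" for m
    by (simp_all add: measurable_W_measure cell_start_nonneg)
  show ?thesis unfolding cond_G_def[abs_def] by measurable
qed

lemma cond_G_measurable:
  assumes "is_fbm M H W"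
  shows "cond_G \<alpha> b W n N \<in> borel_measurable M"
proof -
  have [measurable]: "W (cell_start b m N) \<in> borel_measurable M"
    "W (cell_start b m N + 1 / real b ^ m) \<in> borel_measurable M" for m
    by (simp_all add: is_fbm_measurable[OF assms] cell_start_nonneg)
  show ?thesis unfolding cond_G_def[abs_def] by measurable
qed

lemma sigma_algebra_sigma_W: "sigma_algebra (space M) (sigma_W M W)"
  unfolding sigma_W_def by (rule sigma_algebra_sigma_sets) auto

lemma sigma_algebra_sigma_U: "sigma_algebra (space M) (sigma_U M U)"
  unfolding sigma_U_def by (rule sigma_algebra_sigma_sets) auto

locale random_digits = prob_space M for M :: "'a measure" +
  fixes b :: nat and U :: "nat \<Rightarrow> 'a \<Rightarrow> nat"
  assumes base: "b \<ge> 2"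
    and U_measurable: "\<And>i. U i \<in> measurable M (count_space UNIV)"
    and U_indep: "indep_vars (\<lambda>_. count_space UNIV) U {1..}"
    and U_uniform: "\<And>i. i \<ge> 1 \<Longrightarrow> distr M (count_space UNIV) (U i) = uniform_measure (count_space UNIV) {..<b}"
begin

declare U_measurable[measurable]

definition digit_event :: "nat \<Rightarrow> (nat \<Rightarrow> nat) \<Rightarrow> 'a set" where
  "digit_event n u = {\<omega>\<in>space M. \<forall>i\<in>{1..n}. U i \<omega> = u i}"

lemma digit_event_eq_INT:
  "n \<noteq> 0 \<Longrightarrow> digit_event n u = (\<Inter>i\<in>{1..n}. U i -` {u i} \<inter> space M)"
  by (auto simp: digit_event_def)

lemma digit_event_sets: "digit_event n u \<in> sets M"
  by (cases "n = 0") (auto simp: digit_event_def digit_event_eq_INT intro!: sets.finite_INT)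

lemma digit_event_sigma_U: "digit_event n u \<in> sigma_U M U"
proof -
  interpret sU: sigma_algebra "space M" "sigma_U M U" by (rule sigma_algebra_sigma_U)
  show ?thesis
  proof (cases "n = 0")
    case True then show ?thesis by (simp add: digit_event_def sU.top)
  next
    case False
    have "U i -` {u i} \<inter> space M \<in> sigma_U M U" if "i \<in> {1..n}" for i
      unfolding sigma_U_def using that by (intro sigma_sets.Basic) auto
    then show ?thesis using False unfolding digit_event_eq_INT[OF False] by (intro sU.finite_INT) auto
  qed
qed

lemma prob_digit:
  assumes "i \<ge> 1" "d < b"
  shows "prob (U i -` {d} \<inter> space M) = 1 / real b"
proof -
  have "prob (U i -` {d} \<inter> space M) = measure (distr M (count_space UNIV) (U i)) {d}"
    by (simp add: measure_distr)
  also have "\<dots> = measure (uniform_measure (count_space UNIV) {..<b}) {d}"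
    using assms U_uniform by simp
  also have "\<dots> = 1 / real b"
    using assms by (simp add: measure_def emeasure_uniform_measure divide_ennreal[symmetric]
        ennreal_of_nat_eq_real_of_nat)
  finally show ?thesis .
qed

lemma prob_digit_event:
  assumes "u \<in> PiE {1..n} (\<lambda>_. {..<b})"
  shows "prob (digit_event n u) = 1 / real b ^ n"
proof (cases "n = 0")
  case True then show ?thesis by (simp add: digit_event_def prob_space)
next
  case False
  have "indep_sets (\<lambda>i. {U i -` B \<inter> space M | B. B \<in> sets (count_space UNIV)}) {1..}"
    using U_indep unfolding indep_vars_def2 by auto
  then have "prob (\<Inter>i\<in>{1..n}. U i -` {u i} \<inter> space M) = (\<Prod>i\<in>{1..n}. prob (U i -` {u i} \<inter> space M))"
    using False by (intro indep_setsD) auto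
  also have "\<dots> = (\<Prod>i\<in>{1..n}. 1 / real b)"
    using assms by (intro prod.cong refl prob_digit) auto
  finally show ?thesis by (simp add: digit_event_eq_INT[OF False] power_one_over)
qed

lemma AE_digits_less: "AE \<omega> in M. \<forall>i\<in>{1..n}. U i \<omega> < b"
proof -
  have "AE \<omega> in M. U i \<omega> < b" if "i \<ge> 1" for i
  proof -
    have "AE x in distr M (count_space UNIV) (U i). x < b"
      unfolding U_uniform[OF that] by (rule AE_uniform_measureI) auto
    then show ?thesis by (subst (asm) AE_distr_iff) auto
  qed
  then show ?thesis by (subst AE_finite_all) auto
qed

lemma G_eq_cond_G:
  assumes G: "\<And>\<omega>. G \<omega> = (\<Sum>m=1..n. (1 / \<alpha> ^ m) *
            (W ((real (digitsum b U m \<omega>) + 1) / real b ^ m) \<omega>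
             - W (real (digitsum b U m \<omega>) / real b ^ m) \<omega>))"
    and \<omega>: "\<omega> \<in> digit_event n u" and u: "\<forall>i\<in>{1..n}. u i < b"
  shows "G \<omega> = cond_G \<alpha> b W n (radix_val b u n) \<omega>"
proof -
  have "real (digitsum b U m \<omega>) / real b ^ m = cell_start b m (radix_val b u n)"
    if "m \<in> {1..n}" for m
  proof -
    have "digitsum b U m \<omega> = radix_val b u m"
      using \<omega> that unfolding digitsum_def radix_val_def digit_event_def by (intro sum.cong) auto
    also have "\<dots> = radix_val b u n mod b ^ m"
      using radix_val_mod[of n u b m] u that by auto
    finally show ?thesis by (simp add: cell_start_def)
  qed
  then show ?thesis
    unfolding G cond_G_def by (intro sum.cong refl) (simp add: add_divide_distrib)
qed

lemma sum_indicator_digit_event: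
  fixes F :: "(nat \<Rightarrow> nat) \<Rightarrow> real"
  assumes "\<omega> \<in> space M" "\<forall>i\<in>{1..n}. U i \<omega> < b"
  shows "(\<Sum>u\<in>PiE {1..n} (\<lambda>_. {..<b}). indicator (digit_event n u) \<omega> * F u) =
           F (restrict (\<lambda>i. U i \<omega>) {1..n})"
proof -
  define P where "P = PiE {1..n} (\<lambda>_. {..<b})"
  define u0 where "u0 = restrict (\<lambda>i. U i \<omega>) {1..n}"
  have u0: "u0 \<in> P" "\<omega> \<in> digit_event n u0"
    using assms by (auto simp: P_def u0_def digit_event_def)
  have notin: "\<omega> \<notin> digit_event n u" if u: "u \<in> P" "u \<noteq> u0" for u
  proof
    assume \<omega>: "\<omega> \<in> digit_event n u"
    have "u i = u0 i" for i
    proof (cases "i \<in> {1..n}")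
      case True then show ?thesis using \<omega> by (simp add: digit_event_def u0_def)
    next
      case False then show ?thesis
        using PiE_arb[OF u(1)[unfolded P_def] False] PiE_arb[OF u0(1)[unfolded P_def] False] by simp
    qed
    then show False using u(2) by blast
  qed
  have "(\<Sum>u\<in>P - {u0}. indicator (digit_event n u) \<omega> * F u) = 0"
    using notin by (intro sum.neutral) simp
  moreover have "(\<Sum>u\<in>P. indicator (digit_event n u) \<omega> * F u) =
      indicator (digit_event n u0) \<omega> * F u0 + (\<Sum>u\<in>P - {u0}. indicator (digit_event n u) \<omega> * F u)"
    by (rule sum.remove[OF _ u0(1)]) (simp add: P_def finite_PiE)
  ultimately show ?thesis using u0(2) by (simp add: P_def u0_def)
qed

lemma measurable_W_digitsum:
  assumes "is_fbm M H W" and "\<And>k. 0 \<le> t k"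
  shows "(\<lambda>\<omega>. W (t (digitsum b U m \<omega>)) \<omega>) \<in> borel_measurable M"
  by (rule measurable_compose_countable[where f="\<lambda>k. W (t k)"])
     (simp_all add: digitsum_def is_fbm_measurable[OF assms(1) assms(2)])

lemma expectation_abs_powr_G:
  assumes W: "is_fbm M H W" and ind: "indep_set (sigma_W M W) (sigma_U M U)" and p: "0 < p"
    and G: "\<And>\<omega>. G \<omega> = (\<Sum>m=1..n. (1 / \<alpha> ^ m) *
            (W ((real (digitsum b U m \<omega>) + 1) / real b ^ m) \<omega>
             - W (real (digitsum b U m \<omega>) / real b ^ m) \<omega>))"
  shows "expectation (\<lambda>\<omega>. \<bar>G \<omega>\<bar> powr p) =
     (\<Sum>N<b^n. cond_var H \<alpha> b n N powr (p/2)) * normal_abs_moment p / real b ^ n"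
proof -
  define P where "P = PiE {1..n} (\<lambda>_. {..<b})"
  define f where "f = (\<lambda>u \<omega>. \<bar>cond_G \<alpha> b W n (radix_val b u n) \<omega>\<bar> powr p)"
  have [measurable]:
      "(\<lambda>\<omega>. W ((real (digitsum b U m \<omega>) + 1) / real b ^ m) \<omega>) \<in> borel_measurable M"
      "(\<lambda>\<omega>. W (real (digitsum b U m \<omega>) / real b ^ m) \<omega>) \<in> borel_measurable M" for m
    by (intro measurable_W_digitsum[OF W]; simp)+
  have Gm: "(\<lambda>\<omega>. \<bar>G \<omega>\<bar> powr p) \<in> borel_measurable M"
    unfolding G[abs_def] by measurable
  have fM: "f u \<in> borel_measurable M" for u
    unfolding f_def using cond_G_measurable[OF W] by measurable
  have fW: "f u -` B \<inter> space M \<in> sigma_W M W" if "B \<in> sets borel" for u B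
  proof -
    have "f u \<in> borel_measurable (W_measure M W)"
      unfolding f_def using cond_G_measurable_W_measure by measurable
    from measurable_sets[OF this that] show ?thesis by (simp add: sets_W_measure space_W_measure)
  qed
  have fint: "integrable M (f u)"
    and fexp: "expectation (f u) = cond_var H \<alpha> b n (radix_val b u n) powr (p/2) * normal_abs_moment p" for u
    using gaussian_rv_abs_powr[OF prob_space_axioms p cond_G_gaussian[OF W]] unfolding f_def by auto
  have AEeq: "AE \<omega> in M. \<bar>G \<omega>\<bar> powr p = (\<Sum>u\<in>P. indicator (digit_event n u) \<omega> * f u \<omega>)"
    using AE_digits_less[of n] AE_space
  proof eventually_elim
    case (elim \<omega>)
    define u0 where "u0 = restrict (\<lambda>i. U i \<omega>) {1..n}"
    have u0: "\<omega> \<in> digit_event n u0" "\<forall>i\<in>{1..n}. u0 i < b"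
      using elim by (auto simp: u0_def digit_event_def)
    have "(\<Sum>u\<in>P. indicator (digit_event n u) \<omega> * f u \<omega>) = f u0 \<omega>"
      unfolding P_def u0_def by (rule sum_indicator_digit_event[OF elim(2,1)])
    also have "\<dots> = \<bar>G \<omega>\<bar> powr p"
      unfolding f_def G_eq_cond_G[OF G u0] ..
    finally show ?case ..
  qed
  have "expectation (\<lambda>\<omega>. \<bar>G \<omega>\<bar> powr p) = (\<Sum>u\<in>P. expectation (\<lambda>\<omega>. indicator (digit_event n u) \<omega> * f u \<omega>))"
    using integral_cong_AE[OF Gm _ AEeq] integrable_mult_indicator[OF digit_event_sets fint]
    by (simp add: digit_event_sets fM)
  also have "\<dots> = (\<Sum>u\<in>P. prob (digit_event n u) * expectation (f u))"
    by (intro sum.cong refl indep_set_integral_indicator_times[OF prob_space_axioms ind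
          sigma_algebra_sigma_W sigma_algebra_sigma_U fM fW digit_event_sigma_U digit_event_sets fint])
  also have "\<dots> = (\<Sum>u\<in>P. cond_var H \<alpha> b n (radix_val b u n) powr (p/2)) * normal_abs_moment p / real b ^ n"
    by (simp add: P_def prob_digit_event fexp sum_distrib_right sum_divide_distrib cong: sum.cong)
  also have "(\<Sum>u\<in>P. cond_var H \<alpha> b n (radix_val b u n) powr (p/2)) = (\<Sum>N<b^n. cond_var H \<alpha> b n N powr (p/2))"
    unfolding P_def by (rule sum.reindex_bij_betw[OF bij_betw_radix_val[OF base]])
  finally show ?thesis .
qed

end

section \<open>Averaged correlations of b-adic increments\<close>

lemma sum_lessThan_mult_split:
  fixes f :: "nat \<Rightarrow> real"
  shows "(\<Sum>N<K*c. f N) = (\<Sum>M<K. \<Sum>r<c. f (M*c + r))"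
proof -
  have "(\<Sum>N<K*c. f N) = (\<Sum>M<K. sum f {M*c..<M*c+c})" by (rule sum.nat_group[symmetric])
  also have "\<dots> = (\<Sum>M<K. \<Sum>r<c. f (M*c + r))"
  proof (rule sum.cong[OF refl])
    fix M
    have "sum f {0 + M*c..<c + M*c} = (\<Sum>r\<in>{0..<c}. f (r + M*c))" by (rule sum.shift_bounds_nat_ivl)
    thus "sum f {M*c..<M*c+c} = (\<Sum>r<c. f (M*c + r))" by (simp add: add.commute lessThan_atLeast0)
  qed
  finally show ?thesis .
qed

lemma card_le_window:
  fixes t lo L :: real
  assumes t: "t > 0" and L: "L \<ge> 0" and S: "finite S"
    and win: "\<And>r. r \<in> S \<Longrightarrow> lo < real r * t \<and> real r * t < lo + L"
  shows "real (card S) \<le> L / t + 1"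
proof (cases "S = {}")
  case True thus ?thesis using L t by simp
next
  case False
  define r1 where "r1 = Min S"
  define r2 where "r2 = Max S"
  have r1: "r1 \<in> S" "r2 \<in> S" using S False by (auto simp: r1_def r2_def)
  have sub: "S \<subseteq> {r1..r2}" using S by (auto simp: r1_def r2_def)
  have "card S \<le> card {r1..r2}" by (rule card_mono) (use sub in auto)
  hence c: "real (card S) \<le> real r2 + 1 - real r1" using r1 sub by auto
  have "real r2 * t < lo + L" "lo < real r1 * t" using win r1 by auto
  hence "(real r2 - real r1) * t < L" by (simp add: algebra_simps)
  hence "real r2 - real r1 < L / t" using t by (simp add: field_simps)
  thus ?thesis using c by simp
qed

definition cells_close :: "nat \<Rightarrow> nat \<Rightarrow> nat \<Rightarrow> real \<Rightarrow> nat \<Rightarrow> bool" where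
  "cells_close b m m' D N \<longleftrightarrow> cell_start b m' N < cell_start b m N + 1 / real b ^ m + D \<and>
                         cell_start b m N < cell_start b m' N + 1 / real b ^ m' + D"

text \<open>Within a block of b^m consecutive N the level-m cell advances by a = b^-m per step
  and the level-m' cell by only h \<le> a/2, so the two cells are close for a window of
  consecutive steps of length at most (a + h + 2D) / (a - h).\<close>
lemma card_cells_close_block:
  assumes b: "b \<ge> 2" and mm: "m < m'" and D: "D > 0"
  shows "real (card {r \<in> {..<b^m}. cells_close b m m' D (M * b^m + r)}) \<le> 4 + 4 * D * real b ^ m"
proof -
  define d where "d = m' - m"
  have d: "d \<ge> 1" "m' = m + d" using mm by (auto simp: d_def)
  define a where "a = 1 / real b ^ m"
  define h where "h = 1 / real b ^ m'"
  define Q where "Q = M mod b ^ d"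
  define lo where "lo = real Q / real b ^ d - a - D"
  define S where "S = {r \<in> {..<b^m}. cells_close b m m' D (M * b^m + r)}"
  have bpos: "real b > 0" using b by simp
  have ap: "a > 0" and hp: "h > 0" using bpos by (auto simp: a_def h_def)
  have "2 \<le> b ^ d" using power_increasing[of 1 d b] b d(1) by simp
  then have bd: "real b ^ d \<ge> 2" by (metis of_nat_le_iff of_nat_numeral of_nat_power)
  have ha: "h = a / real b ^ d" by (simp add: h_def a_def d power_add)
  have "h \<le> a / 2" unfolding ha using ap bd b by (intro divide_left_mono) auto
  have modm': "(M * b^m + r) mod b^m' = r + b^m * Q" if "r < b^m" for r
  proof -
    have "(M * b^m + r) mod (b^m * b^d) = b^m * ((M * b^m + r) div b^m mod b^d) + (M * b^m + r) mod b^m"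
      by (rule mod_mult2_eq)
    also have "(M * b^m + r) div b^m = M" using that b by simp
    finally show ?thesis using that by (simp add: d(2) power_add Q_def)
  qed
  have win: "lo < real r * (a - h) \<and> real r * (a - h) < lo + (a + h + 2 * D)" if "r \<in> S" for r
  proof -
    have r: "r < b^m" and cl: "cells_close b m m' D (M * b^m + r)" using that by (auto simp: S_def)
    have x: "cell_start b m (M * b^m + r) = real r * a" using r by (simp add: cell_start_def a_def)
    have y: "cell_start b m' (M * b^m + r) = real r * h + real Q / real b ^ d"
      using modm'[OF r] bpos by (simp add: cell_start_def h_def d(2) power_add field_simps)
    show ?thesis using cl unfolding cells_close_def x y lo_def a_def[symmetric] h_def[symmetric]
      by (auto simp: algebra_simps)
  qed
  have "real (card S) \<le> (a + h + 2 * D) / (a - h) + 1"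
    by (rule card_le_window[OF _ _ _ win]) (use \<open>h \<le> a / 2\<close> ap hp D in \<open>auto simp: S_def\<close>)
  also have "(a + h + 2 * D) / (a - h) \<le> (a + h + 2 * D) / (a / 2)"
    using \<open>h \<le> a / 2\<close> ap hp D by (intro divide_left_mono) auto
  also have "\<dots> \<le> 3 + 4 * D / a"
    using \<open>h \<le> a / 2\<close> ap by (simp add: field_simps)
  finally show ?thesis using bpos by (simp add: S_def a_def)
qed

lemma count_cells_close:
  assumes b: "b \<ge> 2" and mm: "m < m'" "m' \<le> n" and D: "D > 0"
  shows "(\<Sum>N<b^n. if cells_close b m m' D N then 1 else 0) \<le> real b ^ n * (4 / real b ^ m + 4 * D)"
proof -
  let ?F = "\<lambda>N. if cells_close b m m' D N then 1 else (0::real)"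
  have nm: "b ^ n = b ^ (n - m) * b ^ m" using mm by (simp flip: power_add)
  have "(\<Sum>N<b^n. ?F N) = (\<Sum>M<b^(n-m). \<Sum>r<b^m. ?F (M * b^m + r))"
    unfolding nm by (rule sum_lessThan_mult_split)
  also have "\<dots> = (\<Sum>M<b^(n-m). real (card {r \<in> {..<b^m}. cells_close b m m' D (M * b^m + r)}))"
    by (simp add: sum.If_cases Int_def)
  also have "\<dots> \<le> (\<Sum>M<b^(n-m). 4 + 4 * D * real b ^ m)"
    by (intro sum_mono card_cells_close_block[OF b mm(1) D])
  also have "\<dots> = real b ^ n * (4 / real b ^ m + 4 * D)"
  proof -
    have "real b ^ m * real b ^ (n - m) = real b ^ n" using mm by (simp flip: power_add)
    then show ?thesis using b unfolding nm by (simp add: field_simps)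
  qed
  finally show ?thesis .
qed

text \<open>The correlation of the increments over the level-m and level-m' cells of N:
  their standard deviations are b^(-mH) and b^(-m'H).\<close>
definition cell_corr :: "real \<Rightarrow> nat \<Rightarrow> nat \<Rightarrow> nat \<Rightarrow> nat \<Rightarrow> real" where
  "cell_corr H b m m' N = (real b powr H) ^ m * (real b powr H) ^ m' *
     fbm_incr_cov H (cell_start b m N) (cell_start b m N + 1 / real b ^ m) (cell_start b m' N) (cell_start b m' N + 1 / real b ^ m')"

lemma cell_corr_commute: "cell_corr H b m' m N = cell_corr H b m m' N"
  unfolding cell_corr_def by (simp add: fbm_incr_cov_commute mult.commute)

lemma abs_cell_corr_le_1:
  assumes W: "is_fbm M H W" and b: "b \<ge> 2" and H: "0 < H"
  shows "\<bar>cell_corr H b m m' N\<bar> \<le> 1"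
proof -
  define x where "x = cell_start b m N"
  define y where "y = cell_start b m' N"
  define a where "a = 1 / real b ^ m"
  define h where "h = 1 / real b ^ m'"
  have ap: "a > 0" "h > 0" using b by (auto simp: a_def h_def)
  have cs: "(fbm_incr_cov H x (x+a) y (y+h))\<^sup>2 \<le> fbm_incr_cov H x (x+a) x (x+a) * fbm_incr_cov H y (y+h) y (y+h)"
    by (rule fbm_incr_cov_Cauchy_Schwarz[OF W]) (use ap in \<open>auto simp: x_def y_def cell_start_nonneg\<close>)
  have s1: "fbm_incr_cov H x (x+a) x (x+a) = a powr (2*H)" using ap by (simp add: fbm_incr_cov_self)
  have s2: "fbm_incr_cov H y (y+h) y (y+h) = h powr (2*H)" using ap by (simp add: fbm_incr_cov_self)
  have "\<bar>fbm_incr_cov H x (x+a) y (y+h)\<bar> \<le> sqrt (a powr (2*H) * h powr (2*H))"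
  proof -
    have "\<bar>fbm_incr_cov H x (x+a) y (y+h)\<bar> = sqrt ((fbm_incr_cov H x (x+a) y (y+h))\<^sup>2)" by simp
    also have "\<dots> \<le> sqrt (a powr (2*H) * h powr (2*H))" using cs s1 s2 by (intro real_sqrt_le_mono) simp
    finally show ?thesis .
  qed
  also have "\<dots> = a powr H * h powr H" using ap
    by (simp add: real_sqrt_mult powr_half_sqrt[symmetric] powr_powr)
  finally have ic: "\<bar>fbm_incr_cov H x (x+a) y (y+h)\<bar> \<le> a powr H * h powr H" .
  have e1: "(real b powr H) ^ m * a powr H = 1"
    using b by (simp add: a_def powr_divide powr_realpow[symmetric] powr_powr powr_power mult.commute)
  have e2: "(real b powr H) ^ m' * h powr H = 1"
    using b by (simp add: h_def powr_divide powr_realpow[symmetric] powr_powr powr_power mult.commute)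
  have "\<bar>cell_corr H b m m' N\<bar> = (real b powr H) ^ m * (real b powr H) ^ m' * \<bar>fbm_incr_cov H x (x+a) y (y+h)\<bar>"
    by (simp add: cell_corr_def x_def y_def a_def h_def abs_mult)
  also have "\<dots> \<le> (real b powr H) ^ m * (real b powr H) ^ m' * (a powr H * h powr H)"
    by (intro mult_left_mono ic) auto
  also have "\<dots> = ((real b powr H) ^ m * a powr H) * ((real b powr H) ^ m' * h powr H)" by (simp add: ac_simps)
  also have "\<dots> = 1" by (simp add: e1 e2)
  finally show ?thesis .
qed

lemma powr_power_times_inverse_power:
  fixes x H :: real assumes "0 < x"
  shows "(x powr H) ^ k * (1 / x ^ k) = x powr (- (1 - H) * real k)"
proof -
  have "(x powr H) ^ k = x powr (real k * H)" using assms by (simp add: powr_power)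
  moreover have "1 / x ^ k = x powr (- real k)"
    using assms by (simp add: powr_minus_divide powr_realpow)
  ultimately show ?thesis by (simp flip: powr_add add: algebra_simps)
qed

lemma abs_cell_corr_far:
  assumes H: "0 < H" "H < 1" and b: "b \<ge> 2" and nc: "\<not> cells_close b m m' (real b powr (- real m / 2)) N"
  shows "\<bar>cell_corr H b m m' N\<bar> \<le> H * \<bar>2*H - 1\<bar> * real b powr (- (1 - H) * real m')"
proof -
  define D where "D = real b powr (- real m / 2)"
  define x where "x = cell_start b m N"
  define y where "y = cell_start b m' N"
  define a where "a = 1 / real b ^ m"
  define h where "h = 1 / real b ^ m'"
  define K where "K = H * \<bar>2*H - 1\<bar>"
  have bp: "real b > 0" using b by simp
  have ap: "a > 0" "h > 0" "D > 0" using b by (auto simp: a_def h_def D_def)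
  have far: "y \<ge> x + a + D \<or> x \<ge> y + h + D" using nc unfolding cells_close_def D_def[symmetric]
    by (auto simp: x_def y_def a_def h_def)
  have ic: "\<bar>fbm_incr_cov H x (x+a) y (y+h)\<bar> \<le> K * a * h * D powr (2*H - 2)"
  proof (cases "y \<ge> x + a + D")
    case True thus ?thesis using fbm_incr_cov_far_bound[OF H ap(1) ap(2) ap(3) True] by (simp add: K_def)
  next
    case False
    hence "x \<ge> y + h + D" using far by simp
    from fbm_incr_cov_far_bound[OF H ap(2) ap(1) ap(3) this] show ?thesis by (simp add: K_def fbm_incr_cov_commute mult_ac)
  qed
  have ea: "(real b powr H) ^ m * a = real b powr (- (1 - H) * real m)"
    unfolding a_def by (rule powr_power_times_inverse_power[OF bp])
  have eh: "(real b powr H) ^ m' * h = real b powr (- (1 - H) * real m')"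
    unfolding h_def by (rule powr_power_times_inverse_power[OF bp])
  have eD: "D powr (2*H - 2) = real b powr ((1 - H) * real m)"
    using bp by (simp add: D_def powr_powr algebra_simps)
  have "\<bar>cell_corr H b m m' N\<bar> = (real b powr H) ^ m * (real b powr H) ^ m' * \<bar>fbm_incr_cov H x (x+a) y (y+h)\<bar>"
    by (simp add: cell_corr_def x_def y_def a_def h_def abs_mult)
  also have "\<dots> \<le> (real b powr H) ^ m * (real b powr H) ^ m' * (K * a * h * D powr (2*H - 2))"
    by (intro mult_left_mono ic) auto
  also have "\<dots> = K * (((real b powr H) ^ m * a) * D powr (2*H - 2)) * ((real b powr H) ^ m' * h)"
    by (simp add: ac_simps)
  also have "((real b powr H) ^ m * a) * D powr (2*H - 2) = 1"
  proof -
    have "(H - 1) * real m + (1 - H) * real m = 0" by (simp add: algebra_simps)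
    thus ?thesis unfolding ea eD using bp by (simp flip: powr_add)
  qed
  finally show ?thesis by (simp add: eh K_def)
qed

lemma sum_abs_cell_corr_le:
  assumes W: "is_fbm M H W" and H: "0 < H" "H < 1" and b: "b \<ge> 2" and mm: "m < m'" "m' \<le> n"
  shows "(\<Sum>N<b^n. \<bar>cell_corr H b m m' N\<bar>) \<le>
    real b ^ n * (H * \<bar>2*H - 1\<bar> * real b powr (- (1 - H) * real m') + 4 / real b ^ m + 4 * real b powr (- real m / 2))"
proof -
  define D where "D = real b powr (- real m / 2)"
  define K where "K = H * \<bar>2*H - 1\<bar> * real b powr (- (1 - H) * real m')"
  have Dp: "D > 0" using b by (simp add: D_def)
  have pt: "\<bar>cell_corr H b m m' N\<bar> \<le> K + (if cells_close b m m' D N then 1 else 0)" for N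
  proof (cases "cells_close b m m' D N")
    case True
    have "K \<ge> 0" using H by (simp add: K_def)
    thus ?thesis using True abs_cell_corr_le_1[OF W b H(1), of m m' N] by simp
  next
    case False thus ?thesis using abs_cell_corr_far[OF H b, of m m' N] by (simp add: K_def D_def)
  qed
  have "(\<Sum>N<b^n. \<bar>cell_corr H b m m' N\<bar>) \<le> (\<Sum>N<b^n. K + (if cells_close b m m' D N then 1 else 0))"
    by (intro sum_mono pt)
  also have "\<dots> = real b ^ n * K + (\<Sum>N<b^n. if cells_close b m m' D N then 1 else 0)"
    by (simp add: sum.distrib)
  also have "\<dots> \<le> real b ^ n * K + real b ^ n * (4 / real b ^ m + 4 * D)"
    using count_cells_close[OF b mm Dp] by simp
  finally show ?thesis by (simp add: K_def D_def algebra_simps)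
qed

lemma powr_diff_le_eps_plus_linear:
  fixes r Bd e :: real assumes r: "r > 0" and e: "e > 0"
  obtains K where "K \<ge> 0"
    "\<And>x y. x \<in> {0..Bd} \<Longrightarrow> y \<in> {0..Bd} \<Longrightarrow> \<bar>x powr r - y powr r\<bar> \<le> e + K * \<bar>x - y\<bar>"
proof -
  have "uniformly_continuous_on {0..Bd} (\<lambda>x::real. x powr r)"
    using r by (intro compact_uniformly_continuous continuous_on_powr') (auto intro: continuous_intros)
  then obtain \<delta> where \<delta>: "\<delta> > 0"
    "\<And>x y. x \<in> {0..Bd} \<Longrightarrow> y \<in> {0..Bd} \<Longrightarrow> \<bar>x - y\<bar> < \<delta> \<Longrightarrow> \<bar>x powr r - y powr r\<bar> < e"
    using e unfolding uniformly_continuous_on_def dist_real_def by (metis abs_minus_commute)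
  define K where "K = 2 * Bd powr r / \<delta>"
  have "\<bar>x powr r - y powr r\<bar> \<le> e + K * \<bar>x - y\<bar>" if xy: "x \<in> {0..Bd}" "y \<in> {0..Bd}" for x y
  proof (cases "\<bar>x - y\<bar> < \<delta>")
    case True then show ?thesis
      using \<delta>(2)[OF xy] \<delta>(1) by (simp add: K_def add_increasing2)
  next
    case False
    have "x powr r \<le> Bd powr r" "y powr r \<le> Bd powr r"
      using xy r by (auto intro: powr_mono2)
    then have "\<bar>x powr r - y powr r\<bar> \<le> 2 * Bd powr r"
      unfolding abs_le_iff using powr_ge_zero[of x r] powr_ge_zero[of y r] by linarith
    also have "\<dots> = K * \<delta>" using \<delta>(1) by (simp add: K_def)
    also have "\<dots> \<le> K * \<bar>x - y\<bar>" using False \<delta>(1) by (intro mult_left_mono) (auto simp: K_def)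
    finally show ?thesis using e by simp
  qed
  moreover have "K \<ge> 0" using \<delta>(1) by (simp add: K_def)
  ultimately show ?thesis using that by blast
qed

lemma average_powr_tendsto:
  fixes w :: "nat \<Rightarrow> 'b \<Rightarrow> real" and D :: "nat \<Rightarrow> real" and c :: "nat \<Rightarrow> real"
  assumes r: "r > 0"
    and wb: "\<And>n N. N \<in> F n \<Longrightarrow> 0 \<le> w n N \<and> w n N \<le> Bd"
    and Db: "\<And>n. 0 \<le> D n \<and> D n \<le> Bd"
    and c: "\<And>n. c n \<ge> 0" and cF: "\<And>n. c n * real (card (F n)) = 1"
    and E: "(\<lambda>n. c n * (\<Sum>N\<in>F n. \<bar>w n N - D n\<bar>)) \<longlonglongrightarrow> 0"
    and DS: "D \<longlonglongrightarrow> S" and S: "S > 0"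
  shows "(\<lambda>n. c n * (\<Sum>N\<in>F n. w n N powr r)) \<longlonglongrightarrow> S powr r"
proof -
  have dif: "(\<lambda>n. c n * (\<Sum>N\<in>F n. w n N powr r) - D n powr r) \<longlonglongrightarrow> 0"
  proof (rule LIMSEQ_I)
    fix e :: real assume e: "e > 0"
    obtain K where K: "K \<ge> 0"
      "\<And>x y. x \<in> {0..Bd} \<Longrightarrow> y \<in> {0..Bd} \<Longrightarrow> \<bar>x powr r - y powr r\<bar> \<le> e/2 + K * \<bar>x - y\<bar>"
      using powr_diff_le_eps_plus_linear[OF r, of "e/2"] e by auto
    obtain n0 where n0: "\<And>n. n \<ge> n0 \<Longrightarrow> c n * (\<Sum>N\<in>F n. \<bar>w n N - D n\<bar>) < e / (2 * (K + 1))"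
      using LIMSEQ_D[OF E, of "e / (2 * (K + 1))"] e K c by (force simp: abs_mult)
    have "\<bar>c n * (\<Sum>N\<in>F n. w n N powr r) - D n powr r\<bar> < e" if "n \<ge> n0" for n
    proof -
      have "c n * (\<Sum>N\<in>F n. w n N powr r) - D n powr r = c n * (\<Sum>N\<in>F n. w n N powr r - D n powr r)"
        using cF[of n] by (simp add: sum_subtractf right_diff_distrib mult.assoc[symmetric])
      also have "\<bar>\<dots>\<bar> = c n * \<bar>\<Sum>N\<in>F n. w n N powr r - D n powr r\<bar>"
        using c[of n] by (simp add: abs_mult)
      also have "\<dots> \<le> c n * (\<Sum>N\<in>F n. e/2 + K * \<bar>w n N - D n\<bar>)"
        using c[of n] wb Db[of n]
        by (intro mult_left_mono order.trans[OF sum_abs] sum_mono K(2)) auto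
      also have "\<dots> = e/2 + K * (c n * (\<Sum>N\<in>F n. \<bar>w n N - D n\<bar>))"
        using cF[of n] by (simp add: sum.distrib sum_distrib_left[symmetric] algebra_simps)
      also have "\<dots> \<le> e/2 + K * (e / (2 * (K + 1)))"
        using n0[OF that] K(1) by (intro add_left_mono mult_left_mono) auto
      also have "\<dots> < e"
        using K(1) e by (simp add: field_simps)
      finally show ?thesis .
    qed
    then show "\<exists>no. \<forall>n\<ge>no. norm (c n * (\<Sum>N\<in>F n. w n N powr r) - D n powr r - 0) < e"
      by auto
  qed
  have "(\<lambda>n. D n powr r) \<longlonglongrightarrow> S powr r" using S by (intro tendsto_powr DS) auto
  from tendsto_add[OF dif this] show ?thesis by simp
qed

lemma cell_corr_diag:
  assumes b: "b \<ge> 2" shows "cell_corr H b m m N = 1"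
proof -
  have bp: "real b > 0" using b by simp
  define a where "a = 1 / real b ^ m"
  have ap: "a > 0" using bp by (simp add: a_def)
  have "fbm_incr_cov H (cell_start b m N) (cell_start b m N + a) (cell_start b m N) (cell_start b m N + a) = a powr (2*H)"
    using ap by (simp add: fbm_incr_cov_self)
  moreover have "(real b powr H) ^ m * a powr H = 1"
    using bp by (simp add: a_def powr_divide powr_realpow[symmetric] powr_powr powr_power mult.commute)
  moreover have "a powr (2*H) = a powr H * a powr H" by (simp flip: powr_add)
  ultimately show ?thesis unfolding cell_corr_def a_def[symmetric]
    by (metis (no_types, lifting) mult.assoc mult.left_commute mult_1_right)
qed

lemma sum_atLeastAtMost_reverse:
  fixes f :: "nat \<Rightarrow> real"
  shows "(\<Sum>m=1..n. f (n - m)) = (\<Sum>k<n. f k)"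
  by (rule sum.reindex_bij_witness[where i="\<lambda>k. n - k" and j="\<lambda>m. n - m"]) auto

lemma sum_geometric_le:
  fixes q :: real assumes "0 \<le> q" "q < 1"
  shows "(\<Sum>k<n. q ^ k) \<le> 1 / (1 - q)"
proof -
  have "(\<Sum>k<n. q ^ k) = (1 - q ^ n) / (1 - q)" using assms by (simp add: sum_gp_strict)
  also have "\<dots> \<le> 1 / (1 - q)" using assms by (intro divide_right_mono) auto
  finally show ?thesis .
qed

definition corr_sum :: "real \<Rightarrow> real \<Rightarrow> nat \<Rightarrow> nat \<Rightarrow> nat \<Rightarrow> real" where
  "corr_sum H q b n N = (\<Sum>m=1..n. \<Sum>m'=1..n. q ^ (n - m) * q ^ (n - m') * cell_corr H b m m' N)"

definition diag_sum :: "real \<Rightarrow> nat \<Rightarrow> real" where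
  "diag_sum q n = (\<Sum>m=1..n. q ^ (n - m) * q ^ (n - m))"

context
  fixes M :: "'a measure" and W :: "real \<Rightarrow> 'a \<Rightarrow> real" and H q :: real and b :: nat
  assumes W: "is_fbm M H W" and H: "0 < H" "H < 1" and b: "b \<ge> 2" and q: "0 < q" "q < 1"
begin

text \<open>corr_decay^m dominates both the far-cell correlations b^(-(1-H)m') and the
  proportion b^(-m/2) of N with close cells.\<close>
definition "corr_decay = max (real b powr (- (1 - H))) (real b powr (- 1 / 2))"
definition "corr_rate = max q corr_decay"
definition "corr_const = H * \<bar>2*H - 1\<bar> + 8"

lemma corr_decay_bounds: "0 < corr_decay" "corr_decay < 1"
proof -
  have bp: "real b > 1" using b by simp
  have "real b powr (- (1 - H)) < 1" "real b powr (- 1 / 2) < 1" using bp H by (auto intro!: powr_less_one)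
  thus "0 < corr_decay" "corr_decay < 1" using bp by (auto simp: corr_decay_def less_max_iff_disj)
qed

lemma corr_rate_bounds: "0 < corr_rate" "corr_rate < 1" "q \<le> corr_rate" "corr_decay \<le> corr_rate"
  using corr_decay_bounds q by (auto simp: corr_rate_def)

lemma sum_abs_cell_corr_le_decay:
  assumes mm: "m < m'" "m' \<le> n"
  shows "(\<Sum>N<b^n. \<bar>cell_corr H b m m' N\<bar>) \<le> real b ^ n * (corr_const * corr_decay ^ m)"
proof -
  have bp: "real b \<ge> 1" using b by simp
  define K where "K = H * \<bar>2*H - 1\<bar>"
  have K: "K \<ge> 0" using H by (simp add: K_def)
  have t1: "real b powr (- (1 - H) * real m') \<le> corr_decay ^ m"
  proof -
    have "real b powr (- (1 - H) * real m') \<le> real b powr (- (1 - H) * real m)"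
      using bp H mm by (intro powr_mono) (auto simp: mult_le_cancel_left)
    also have "\<dots> = (real b powr (- (1 - H))) ^ m" using bp by (simp add: powr_power mult.commute)
    also have "\<dots> \<le> corr_decay ^ m" by (intro power_mono) (auto simp: corr_decay_def)
    finally show ?thesis .
  qed
  have t2: "real b powr (- real m / 2) \<le> corr_decay ^ m"
  proof -
    have "real b powr (- real m / 2) = (real b powr (- 1 / 2)) ^ m" using bp by (simp add: powr_power)
    also have "\<dots> \<le> corr_decay ^ m" by (intro power_mono) (auto simp: corr_decay_def)
    finally show ?thesis .
  qed
  have t3: "1 / real b ^ m \<le> real b powr (- real m / 2)"
  proof -
    have "1 / real b ^ m = real b powr (- real m)" using bp by (simp add: powr_minus_divide powr_realpow)
    also have "\<dots> \<le> real b powr (- real m / 2)" using bp by (intro powr_mono) auto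
    finally show ?thesis .
  qed
  have "(\<Sum>N<b^n. \<bar>cell_corr H b m m' N\<bar>) \<le>
    real b ^ n * (K * real b powr (- (1 - H) * real m') + 4 / real b ^ m + 4 * real b powr (- real m / 2))"
    using sum_abs_cell_corr_le[OF W H b mm] by (simp add: K_def)
  also have "\<dots> \<le> real b ^ n * (K * corr_decay ^ m + 4 * corr_decay ^ m + 4 * corr_decay ^ m)"
  proof -
    have i1: "K * real b powr (- (1 - H) * real m') \<le> K * corr_decay ^ m" by (rule mult_left_mono[OF t1 K])
    have i2: "4 / real b ^ m \<le> 4 * corr_decay ^ m" using t3 t2 by simp
    have i3: "4 * real b powr (- real m / 2) \<le> 4 * corr_decay ^ m" using t2 by simp
    have "K * real b powr (- (1 - H) * real m') + 4 / real b ^ m + 4 * real b powr (- real m / 2)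
        \<le> K * corr_decay ^ m + 4 * corr_decay ^ m + 4 * corr_decay ^ m" using i1 i2 i3 by linarith
    thus ?thesis by (rule mult_left_mono) simp
  qed
  also have "\<dots> = real b ^ n * (corr_const * corr_decay ^ m)" by (simp add: corr_const_def K_def algebra_simps)
  finally show ?thesis .
qed

lemma weighted_sum_abs_cell_corr_le:
  assumes mm: "m \<in> {1..n}" "m' \<in> {1..n}" "m \<noteq> m'"
  shows "q ^ (n - m) * q ^ (n - m') * (\<Sum>N<b^n. \<bar>cell_corr H b m m' N\<bar>) \<le> real b ^ n * corr_const * corr_rate ^ n"
proof -
  have corr_const: "corr_const \<ge> 0" using H by (simp add: corr_const_def)
  have key: "q ^ (n - k) * q ^ (n - k') * (\<Sum>N<b^n. \<bar>cell_corr H b k k' N\<bar>) \<le> real b ^ n * corr_const * corr_rate ^ n"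
    if kk: "k < k'" "k' \<le> n" for k k'
  proof -
    have "q ^ (n - k) * q ^ (n - k') * (\<Sum>N<b^n. \<bar>cell_corr H b k k' N\<bar>) \<le> q ^ (n - k) * q ^ (n - k') * (real b ^ n * (corr_const * corr_decay ^ k))"
      using sum_abs_cell_corr_le_decay[OF kk] q by (intro mult_left_mono) auto
    also have "\<dots> = real b ^ n * corr_const * (q ^ (n - k) * corr_decay ^ k) * q ^ (n - k')" by (simp add: ac_simps)
    also have "\<dots> \<le> real b ^ n * corr_const * (corr_rate ^ (n - k) * corr_rate ^ k) * 1"
    proof -
      have a1: "q ^ (n - k) \<le> corr_rate ^ (n - k)" by (rule power_mono) (use q corr_rate_bounds in auto)
      have a2: "corr_decay ^ k \<le> corr_rate ^ k" by (rule power_mono) (use corr_decay_bounds corr_rate_bounds in auto)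
      have a3: "q ^ (n - k') \<le> 1" by (rule power_le_one) (use q in auto)
      have a4: "q ^ (n - k) * corr_decay ^ k \<le> corr_rate ^ (n - k) * corr_rate ^ k"
        by (rule mult_mono[OF a1 a2]) (use corr_rate_bounds corr_decay_bounds in auto)
      have a5: "0 \<le> real b ^ n * corr_const" using corr_const by simp
      have le: "real b ^ n * corr_const * (q ^ (n - k) * corr_decay ^ k) \<le> real b ^ n * corr_const * (corr_rate ^ (n - k) * corr_rate ^ k)"
        by (rule mult_left_mono[OF a4 a5])
      have a6: "0 \<le> real b ^ n * corr_const * (corr_rate ^ (n - k) * corr_rate ^ k)" using a5 corr_rate_bounds by simp
      show ?thesis by (rule mult_mono[OF le a3 a6]) (use q in simp)
    qed
    also have "corr_rate ^ (n - k) * corr_rate ^ k = corr_rate ^ n" using kk by (simp flip: power_add)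
    finally show ?thesis by simp
  qed
  show ?thesis
  proof (cases "m < m'")
    case True thus ?thesis using key[of m m'] mm by auto
  next
    case False
    hence "m' < m" using mm by simp
    hence k2: "q ^ (n - m') * q ^ (n - m) * (\<Sum>N<b^n. \<bar>cell_corr H b m' m N\<bar>) \<le> real b ^ n * corr_const * corr_rate ^ n"
      using key[of m' m] mm by simp
    have "(\<Sum>N<b^n. \<bar>cell_corr H b m' m N\<bar>) = (\<Sum>N<b^n. \<bar>cell_corr H b m m' N\<bar>)"
      by (intro sum.cong refl arg_cong[where f=abs] cell_corr_commute)
    thus ?thesis using k2 by (simp only: mult.commute[of "q ^ (n - m')"])
  qed
qed

lemma sum_split_diag:
  fixes f :: "nat \<Rightarrow> real" and g :: "nat \<Rightarrow> real"
  assumes "m \<in> S" "finite S" "g m = 1"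
  shows "(\<Sum>m'\<in>S. f m' * g m') = (\<Sum>m'\<in>S. f m' * (if m = m' then 0 else g m')) + f m"
proof -
  have "(\<Sum>m'\<in>S. f m' * g m') = (\<Sum>m'\<in>S. f m' * (if m = m' then 0 else g m') + (if m = m' then f m' else 0))"
    by (rule sum.cong) (use assms in auto)
  also have "\<dots> = (\<Sum>m'\<in>S. f m' * (if m = m' then 0 else g m')) + (\<Sum>m'\<in>S. if m = m' then f m' else 0)"
    by (rule sum.distrib)
  also have "(\<Sum>m'\<in>S. if m = m' then f m' else 0) = f m" using assms by (simp add: sum.delta)
  finally show ?thesis .
qed

lemma corr_sum_minus_diag:
  "corr_sum H q b n N - diag_sum q n = (\<Sum>m=1..n. \<Sum>m'=1..n. q ^ (n - m) * q ^ (n - m') *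
          (if m = m' then 0 else cell_corr H b m m' N))"
proof -
  have "corr_sum H q b n N = (\<Sum>m=1..n. (\<Sum>m'=1..n. q ^ (n - m) * q ^ (n - m') *
          (if m = m' then 0 else cell_corr H b m m' N)) + q ^ (n - m) * q ^ (n - m))"
    unfolding corr_sum_def
  proof (rule sum.cong[OF refl])
    fix m assume m: "m \<in> {1..n}"
    show "(\<Sum>m'=1..n. q ^ (n - m) * q ^ (n - m') * cell_corr H b m m' N) =
       (\<Sum>m'=1..n. q ^ (n - m) * q ^ (n - m') * (if m = m' then 0 else cell_corr H b m m' N)) + q ^ (n - m) * q ^ (n - m)"
      using sum_split_diag[where m=m and S="{1..n}" and f="\<lambda>m'. q ^ (n - m) * q ^ (n - m')" and g="\<lambda>m'. cell_corr H b m m' N"]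
        m cell_corr_diag[OF b, of H m N] by simp
  qed
  thus ?thesis by (simp add: diag_sum_def sum.distrib)
qed

lemma sum_abs_corr_sum_minus_diag_le:
  "(\<Sum>N<b^n. \<bar>corr_sum H q b n N - diag_sum q n\<bar>) \<le> real n ^ 2 * (real b ^ n * corr_const * corr_rate ^ n)"
proof -
  define T where "T = (\<lambda>m m' N. if m = m' then 0 else \<bar>cell_corr H b m m' N\<bar>)"
  have pt: "\<bar>corr_sum H q b n N - diag_sum q n\<bar> \<le> (\<Sum>m=1..n. \<Sum>m'=1..n. q ^ (n - m) * q ^ (n - m') * T m m' N)" for N
  proof -
    have "\<bar>corr_sum H q b n N - diag_sum q n\<bar> \<le> (\<Sum>m=1..n. \<bar>\<Sum>m'=1..n. q ^ (n - m) * q ^ (n - m') *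
          (if m = m' then 0 else cell_corr H b m m' N)\<bar>)"
      unfolding corr_sum_minus_diag by (rule sum_abs)
    also have "\<dots> \<le> (\<Sum>m=1..n. \<Sum>m'=1..n. \<bar>q ^ (n - m) * q ^ (n - m') * (if m = m' then 0 else cell_corr H b m m' N)\<bar>)"
      by (rule sum_mono) (rule sum_abs)
    also have "\<dots> = (\<Sum>m=1..n. \<Sum>m'=1..n. q ^ (n - m) * q ^ (n - m') * T m m' N)"
    proof (rule sum.cong[OF refl], rule sum.cong[OF refl])
      fix m m'
      show "\<bar>q ^ (n - m) * q ^ (n - m') * (if m = m' then 0 else cell_corr H b m m' N)\<bar> = q ^ (n - m) * q ^ (n - m') * T m m' N"
        using q unfolding T_def abs_mult by simp
    qed
    finally show ?thesis .
  qed
  have "(\<Sum>N<b^n. \<bar>corr_sum H q b n N - diag_sum q n\<bar>) \<le> (\<Sum>N<b^n. \<Sum>m=1..n. \<Sum>m'=1..n. q ^ (n - m) * q ^ (n - m') * T m m' N)"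
    by (rule sum_mono) (rule pt)
  also have "\<dots> = (\<Sum>m=1..n. \<Sum>N<b^n. \<Sum>m'=1..n. q ^ (n - m) * q ^ (n - m') * T m m' N)"
    by (rule sum.swap)
  also have "\<dots> = (\<Sum>m=1..n. \<Sum>m'=1..n. \<Sum>N<b^n. q ^ (n - m) * q ^ (n - m') * T m m' N)"
    by (rule sum.cong[OF refl]) (rule sum.swap)
  also have "\<dots> = (\<Sum>m=1..n. \<Sum>m'=1..n. q ^ (n - m) * q ^ (n - m') * (\<Sum>N<b^n. T m m' N))"
    by (rule sum.cong[OF refl], rule sum.cong[OF refl]) (rule sum_distrib_left[symmetric])
  also have "\<dots> \<le> (\<Sum>m=1..n. \<Sum>m'=1..n. real b ^ n * corr_const * corr_rate ^ n)"
  proof (rule sum_mono, rule sum_mono)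
    fix m m' assume mm: "m \<in> {1..n}" "m' \<in> {1..n}"
    show "q ^ (n - m) * q ^ (n - m') * (\<Sum>N<b^n. T m m' N) \<le> real b ^ n * corr_const * corr_rate ^ n"
    proof (cases "m = m'")
      case True
      have "corr_const \<ge> 0" using H by (simp add: corr_const_def)
      thus ?thesis using True corr_rate_bounds by (simp add: T_def)
    next
      case False
      have "(\<Sum>N<b^n. T m m' N) = (\<Sum>N<b^n. \<bar>cell_corr H b m m' N\<bar>)" using False by (simp add: T_def)
      thus ?thesis using weighted_sum_abs_cell_corr_le[OF mm False] by simp
    qed
  qed
  also have "\<dots> = real n ^ 2 * (real b ^ n * corr_const * corr_rate ^ n)" by (simp add: power2_eq_square)
  finally show ?thesis .
qed

lemma corr_sum_nonneg: "0 \<le> corr_sum H q b n N"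
proof -
  have "0 \<le> (\<Sum>j\<in>{1..n}. \<Sum>k\<in>{1..n}. (q ^ (n - j) * (real b powr H) ^ j) * (q ^ (n - k) * (real b powr H) ^ k) *
      fbm_incr_cov H (cell_start b j N) (cell_start b j N + 1 / real b ^ j) (cell_start b k N) (cell_start b k N + 1 / real b ^ k))"
    by (rule fbm_incr_cov_psd[OF W]) (auto simp: cell_start_nonneg)
  also have "\<dots> = corr_sum H q b n N" unfolding corr_sum_def cell_corr_def
    by (intro sum.cong refl) (simp add: ac_simps)
  finally show ?thesis .
qed

lemma sum_power_diff_le: "(\<Sum>m=1..n. q ^ (n - m)) \<le> 1 / (1 - q)"
  using sum_atLeastAtMost_reverse[of "\<lambda>k. q ^ k" n] sum_geometric_le[of q n] q by simp

lemma corr_sum_le: "corr_sum H q b n N \<le> (1 / (1 - q))\<^sup>2"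
proof -
  have "corr_sum H q b n N \<le> (\<Sum>m=1..n. \<Sum>m'=1..n. q ^ (n - m) * q ^ (n - m'))"
    unfolding corr_sum_def
  proof (rule sum_mono, rule sum_mono)
    fix m m'
    have "q ^ (n - m) * q ^ (n - m') * cell_corr H b m m' N \<le> q ^ (n - m) * q ^ (n - m') * 1"
      using abs_cell_corr_le_1[OF W b H(1), of m m' N] q by (intro mult_left_mono) auto
    thus "q ^ (n - m) * q ^ (n - m') * cell_corr H b m m' N \<le> q ^ (n - m) * q ^ (n - m')" by simp
  qed
  also have "\<dots> = (\<Sum>m=1..n. q ^ (n - m)) * (\<Sum>m'=1..n. q ^ (n - m'))"
    by (simp add: sum_product)
  also have "\<dots> \<le> (1 / (1 - q)) * (1 / (1 - q))"
    using sum_power_diff_le q by (intro mult_mono) (auto intro: sum_nonneg)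
  finally show ?thesis by (simp add: power2_eq_square)
qed

lemma diag_sum_eq: "diag_sum q n = (\<Sum>k<n. (q\<^sup>2) ^ k)"
  unfolding diag_sum_def using sum_atLeastAtMost_reverse[of "\<lambda>k. (q\<^sup>2) ^ k" n]
  by (simp add: power_mult_distrib power2_eq_square power_mult[symmetric] mult.commute flip: power_add)

lemma diag_sum_bounds: "0 \<le> diag_sum q n" "diag_sum q n \<le> (1 / (1 - q))\<^sup>2"
proof -
  show "0 \<le> diag_sum q n" unfolding diag_sum_eq by (intro sum_nonneg) auto
  have "diag_sum q n \<le> 1 / (1 - q\<^sup>2)" unfolding diag_sum_eq using q
    by (intro sum_geometric_le) (auto simp: power_less_one_iff abs_square_less_1)
  also have "1 / (1 - q\<^sup>2) \<le> (1 / (1 - q))\<^sup>2"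
  proof -
    have "(1 - q)\<^sup>2 \<le> 1 - q\<^sup>2" using q by (simp add: power2_eq_square algebra_simps)
    moreover have "0 < (1 - q)\<^sup>2" using q by simp
    moreover have "0 < 1 - q\<^sup>2" using q by (simp add: abs_square_less_1)
    ultimately have "1 / (1 - q\<^sup>2) \<le> 1 / (1 - q)\<^sup>2" by (intro divide_left_mono mult_pos_pos) auto
    thus ?thesis by (simp add: power_one_over)
  qed
  finally show "diag_sum q n \<le> (1 / (1 - q))\<^sup>2" .
qed

lemma diag_sum_tendsto: "(\<lambda>n. diag_sum q n) \<longlonglongrightarrow> 1 / (1 - q\<^sup>2)"
proof -
  have "(\<lambda>k. (q\<^sup>2) ^ k) sums (1 / (1 - q\<^sup>2))" using q
    by (intro geometric_sums) (simp add: abs_square_less_1)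
  thus ?thesis unfolding diag_sum_eq sums_def .
qed

lemma square_times_corr_rate_power_tendsto: "(\<lambda>n. real n ^ 2 * corr_rate ^ n) \<longlonglongrightarrow> 0"
proof -
  define s where "s = sqrt corr_rate"
  have s: "0 < s" "s < 1" using corr_rate_bounds by (auto simp: s_def)
  have "(\<lambda>n. real n * s ^ n) \<longlonglongrightarrow> 0" using s by (intro powser_times_n_limit_0) simp
  hence "(\<lambda>n. (real n * s ^ n) ^ 2) \<longlonglongrightarrow> 0 ^ 2" by (intro tendsto_power)
  moreover have "(real n * s ^ n) ^ 2 = real n ^ 2 * corr_rate ^ n" for n
  proof -
    have s2: "s ^ 2 = corr_rate" using corr_rate_bounds by (simp add: s_def)
    have "(s ^ n) ^ 2 = (s ^ 2) ^ n" by (metis power_mult mult.commute)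
    thus ?thesis by (simp add: power_mult_distrib s2)
  qed
  ultimately show ?thesis by simp
qed

theorem average_corr_sum_powr_tendsto:
  assumes r: "r > 0"
  shows "(\<lambda>n. (1 / real b ^ n) * (\<Sum>N\<in>{..<b^n}. corr_sum H q b n N powr r)) \<longlonglongrightarrow> (1 / (1 - q\<^sup>2)) powr r"
proof (rule average_powr_tendsto[where D="diag_sum q" and Bd="(1 / (1 - q))\<^sup>2"])
  show "0 < r" by fact
  show "0 \<le> corr_sum H q b n N \<and> corr_sum H q b n N \<le> (1 / (1 - q))\<^sup>2" for n N using corr_sum_nonneg corr_sum_le by auto
  show "0 \<le> diag_sum q n \<and> diag_sum q n \<le> (1 / (1 - q))\<^sup>2" for n using diag_sum_bounds by auto
  show "0 \<le> 1 / real b ^ n" for n by simp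
  show "1 / real b ^ n * real (card {..<b ^ n}) = 1" for n using b by simp
  show "(\<lambda>n. diag_sum q n) \<longlonglongrightarrow> 1 / (1 - q\<^sup>2)" by (rule diag_sum_tendsto)
  show "0 < 1 / (1 - q\<^sup>2)" using q by (simp add: abs_square_less_1)
  show "(\<lambda>n. 1 / real b ^ n * (\<Sum>N\<in>{..<b ^ n}. \<bar>corr_sum H q b n N - diag_sum q n\<bar>)) \<longlonglongrightarrow> 0"
  proof (rule Lim_null_comparison)
    have corr_const: "corr_const \<ge> 0" using H by (simp add: corr_const_def)
    show "\<forall>\<^sub>F n in sequentially. norm (1 / real b ^ n * (\<Sum>N\<in>{..<b ^ n}. \<bar>corr_sum H q b n N - diag_sum q n\<bar>)) \<le> corr_const * (real n ^ 2 * corr_rate ^ n)"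
    proof (intro always_eventually allI)
      fix n
      have bp: "real b ^ n > 0" using b by simp
      have "norm (1 / real b ^ n * (\<Sum>N\<in>{..<b ^ n}. \<bar>corr_sum H q b n N - diag_sum q n\<bar>)) =
            (\<Sum>N<b ^ n. \<bar>corr_sum H q b n N - diag_sum q n\<bar>) / real b ^ n" by (simp add: abs_mult)
      also have "\<dots> \<le> real n ^ 2 * (real b ^ n * corr_const * corr_rate ^ n) / real b ^ n"
        by (rule divide_right_mono[OF sum_abs_corr_sum_minus_diag_le]) (use bp in simp)
      also have "\<dots> = corr_const * (real n ^ 2 * corr_rate ^ n)"
      proof -
        have gen: "x * (B * C * m) / B = C * (x * m)" if "B > 0" for x B C m :: real
          using that by (simp add: field_simps)
        show ?thesis by (rule gen[OF bp])
      qed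
      finally show "norm (1 / real b ^ n * (\<Sum>N\<in>{..<b ^ n}. \<bar>corr_sum H q b n N - diag_sum q n\<bar>)) \<le> corr_const * (real n ^ 2 * corr_rate ^ n)" .
    qed
    show "(\<lambda>n. corr_const * (real n ^ 2 * corr_rate ^ n)) \<longlonglongrightarrow> 0"
      using tendsto_mult_right_zero[OF square_times_corr_rate_power_tendsto, of corr_const] by simp
  qed
qed

end

lemma corr_sum_eq_cond_var:
  assumes \<alpha>: "\<alpha> > 0"
  shows "corr_sum H (\<alpha> * real b powr H) b n N = (\<alpha> * real b powr H) ^ (2*n) * cond_var H \<alpha> b n N"
proof -
  define \<beta> where "\<beta> = real b powr H"
  define q where "q = \<alpha> * \<beta>"
  have key: "q ^ (n - m) * \<beta> ^ m = q ^ n * (1 / \<alpha> ^ m)" if "m \<le> n" for m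
  proof -
    have "q ^ n = q ^ (n - m) * q ^ m" using that by (simp flip: power_add)
    also have "q ^ m = \<alpha> ^ m * \<beta> ^ m" by (simp add: q_def power_mult_distrib)
    finally show ?thesis using \<alpha> by (simp add: field_simps)
  qed
  have "corr_sum H q b n N = (\<Sum>m=1..n. \<Sum>m'=1..n. (q ^ (n - m) * \<beta> ^ m) * (q ^ (n - m') * \<beta> ^ m') *
      fbm_incr_cov H (cell_start b m N) (cell_start b m N + 1 / real b ^ m)
                     (cell_start b m' N) (cell_start b m' N + 1 / real b ^ m'))"
    unfolding corr_sum_def cell_corr_def \<beta>_def[symmetric] by (simp add: mult_ac)
  also have "\<dots> = q ^ (2*n) * cond_var H \<alpha> b n N"
  proof -
    have "(q ^ (n - m) * \<beta> ^ m) * (q ^ (n - m') * \<beta> ^ m') * x = q ^ (2*n) * (1 / \<alpha> ^ m * (1 / \<alpha> ^ m') * x)"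
      if "m \<le> n" "m' \<le> n" for m m' x
      unfolding key[OF that(1)] key[OF that(2)] mult_2 power_add by (simp add: mult_ac)
    then show ?thesis unfolding cond_var_def sum_distrib_left by (intro sum.cong refl) auto
  qed
  finally show ?thesis by (simp add: q_def \<beta>_def)
qed

lemma corr_sum_powr_eq_cond_var_powr:
  assumes W: "is_fbm M H W" and \<alpha>: "0 < \<alpha>" and b: "b \<ge> 2" and H: "0 < H" and p: "p = 1 / H"
  shows "corr_sum H (\<alpha> * real b powr H) b n N powr (p/2) =
           (\<alpha> powr p * real b) ^ n * cond_var H \<alpha> b n N powr (p/2)"
proof -
  define q where "q = \<alpha> * real b powr H"
  have q: "0 < q" using \<alpha> b by (simp add: q_def)
  have "(q ^ (2*n)) powr (p/2) = q powr (real n * p)"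
    using q by (simp add: powr_realpow[symmetric] powr_powr)
  also have "\<dots> = \<alpha> powr (real n * p) * (real b powr H) powr (real n * p)"
    using \<alpha> b by (simp add: q_def powr_mult)
  also have "\<dots> = (\<alpha> powr p * real b) ^ n"
    using \<alpha> b H p by (simp add: powr_power powr_powr powr_realpow power_mult_distrib)
  finally have "(q ^ (2*n)) powr (p/2) = (\<alpha> powr p * real b) ^ n" .
  then show ?thesis
    using corr_sum_eq_cond_var[OF \<alpha>, of H b n N] cond_var_nonneg[OF W] q
    by (simp add: q_def powr_mult)
qed

lemma (in random_digits) scaled_moment_eq_average:
  assumes W: "is_fbm M H W" and ind: "indep_set (sigma_W M W) (sigma_U M U)"
    and H: "0 < H" and \<alpha>: "0 < \<alpha>" and p: "p = 1 / H"
    and G: "\<And>\<omega>. G \<omega> = (\<Sum>m=1..n. (1 / \<alpha> ^ m) *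
            (W ((real (digitsum b U m \<omega>) + 1) / real b ^ m) \<omega>
             - W (real (digitsum b U m \<omega>) / real b ^ m) \<omega>))"
  shows "(\<alpha> powr p * real b) ^ n * expectation (\<lambda>\<omega>. \<bar>G \<omega>\<bar> powr p) =
           normal_abs_moment p * (1 / real b ^ n *
             (\<Sum>N<b^n. corr_sum H (\<alpha> * real b powr H) b n N powr (p/2)))"
  using expectation_abs_powr_G[OF W ind _ G] H p
    corr_sum_powr_eq_cond_var_powr[OF W \<alpha> base H p]
  by (simp add: sum_distrib_left sum_divide_distrib mult_ac)

lemma c_H_eq_normal_abs_moment: "0 < H \<Longrightarrow> c_H H = normal_abs_moment (1 / H)"
  unfolding c_H_def normal_abs_moment_def by (simp add: field_simps)

theorem proposition3p4:
  fixes M :: "'a measure" and H \<alpha> p :: real and b :: nat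
    and W :: "real \<Rightarrow> 'a \<Rightarrow> real" and U :: "nat \<Rightarrow> 'a \<Rightarrow> nat"
    and G :: "nat \<Rightarrow> 'a \<Rightarrow> real"
  assumes "prob_space M"
    and "0 < H" "H < 1" "0 < \<alpha>" "\<alpha> < 1" "b \<ge> 2" "\<alpha> * real b powr H < 1"
    and "p = 1 / H"
    and "is_fbm M H W"
    and "\<And>i. U i \<in> measurable M (count_space UNIV)"
    and "prob_space.indep_vars M (\<lambda>_. count_space UNIV) U {1..}"
    and "\<And>i. i \<ge> 1 \<Longrightarrow> distr M (count_space UNIV) (U i) = uniform_measure (count_space UNIV) {..<b}"
    and "prob_space.indep_set M (sigma_W M W) (sigma_U M U)"
    and "\<And>n \<omega>. G n \<omega> = (\<Sum>m=1..n. (1 / \<alpha> ^ m) *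
            (W ((real (digitsum b U m \<omega>) + 1) / real b ^ m) \<omega>
             - W (real (digitsum b U m \<omega>) / real b ^ m) \<omega>))"
  shows "(\<lambda>n. (\<alpha> powr p * real b) ^ n * prob_space.expectation M (\<lambda>\<omega>. \<bar>G n \<omega>\<bar> powr p))
           \<longlonglongrightarrow> c_H H / (1 - \<alpha>\<^sup>2 * real b powr (2*H)) powr (p / 2)"
proof -
  interpret random_digits M b U
    by (intro random_digits.intro random_digits_axioms.intro) (use assms in auto)
  define q where "q = \<alpha> * real b powr H"
  have q: "0 < q" "q < 1" using assms by (simp_all add: q_def)
  have q2: "q\<^sup>2 = \<alpha>\<^sup>2 * real b powr (2*H)"
    using assms by (simp add: q_def power_mult_distrib powr_power mult.commute)
  have "(\<lambda>n. normal_abs_moment p * (1 / real b ^ n * (\<Sum>N<b^n. corr_sum H q b n N powr (p/2))))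
          \<longlonglongrightarrow> normal_abs_moment p * (1 / (1 - q\<^sup>2)) powr (p/2)"
    using assms q by (intro tendsto_mult_left average_corr_sum_powr_tendsto) auto
  moreover have "normal_abs_moment p * (1 / (1 - q\<^sup>2)) powr (p/2) =
                   c_H H / (1 - \<alpha>\<^sup>2 * real b powr (2*H)) powr (p / 2)"
    using assms q by (simp add: c_H_eq_normal_abs_moment q2 powr_divide abs_square_less_1)
  ultimately show ?thesis
    using scaled_moment_eq_average[OF assms(9,13,2,4,8,14)] by (simp add: q_def)
qed

end
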